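(* Let $k\in\hat I$ and $u\in\mathbb C^\times$. Let $V^{(k)}(u)$ be the complex vector space with basis $[u]_j^{(k)}$, $j\in\mathbb Z$ (here $j$ is not taken mod $n$). Define - $E_i(z)[u]^{(k)}_j=\delta(q_1^{j+1}u/z)[u]^{(k)}_{j+1}$ if $i+j+1\equiv k$, and $0$ otherwise; - $F_i(z)[u]^{(k)}_{j+1}=\delta(q_1^{j+1}u/z)[u]^{(k)}_j$ if $i+j+1\equiv k$, and $0$ otherwise; - $K_i^\pm(z)[u]^{(k)}_j$ equal to $\psi(q_1^ju/z)[u]^{(k)}_j$ if $j+i\equiv k$, to $\psi(q_1^jq_3^{-1}u/z)^{-1}[u]^{(k)}_j$ if $j+i+1\equiv k$, and to $[u]^{(k)}_j$ otherwise. Here rational functions in $K_i^\pm(z)$ are expanded in $z^{\mp1}$. Give $V^{(k)}(u)$ the $\mathbb Z^n$-grading $\deg[u]^{(k)}_j=m(1_0+\dots+1_{n-1})+1_k+1_{k-1}+\dots+1_{k-r}$ for $j=mn+r$ with $0\le r\le n-1$ (so $\deg [u]_{-1}^{(k)}=0$). Then these formulas define on $V^{(k)}(u)$ the structure of an irreducible, tame, $\mathbb Z^n$-graded $\mathcal E_n$-module of level $1$.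
   Context: Fix an integer $n\ge3$ and let $\hat I=\{0,1,\dots,n-1\}$. Indices in $\hat I$ are taken cyclically modulo $n$, and for integers $a,b$ we write $a\equiv b$ if $n\mid a-b$. Let $a_{ii}=2$, $a_{i,i\pm1}=-1$ and $a_{ij}=0$ otherwise. Let $m_{i-1,i}=-1$, $m_{i,i-1}=1$ and $m_{ij}=0$ otherwise ($i,j\in\hat I$). Let $q,d\in\mathbb C^\times$ and set $q_1=d/q$, $q_2=q^2$, $q_3=1/(dq)$. Assume $q_1,q_2,q_3$ are generic: $q_1^aq_2^bq_3^c=1$ with $a,b,c\in\mathbb Z$ only if $a=b=c$. Let $\delta(z)=\sum_{m\in\mathbb Z}z^m$ and $\psi(z)=\frac{q-q^{-1}z}{1-z}$. The algebra $\mathcal E_n$ is generated by $E_{i,m},F_{i,m}$ ($i\in\hat I$, $m\in\mathbb Z$), $H_{i,l}$ ($l\ne0$) and $K_i^{\pm1}$. Its generating series are $E_i(z)=\sum_mE_{i,m}z^{-m}$, $F_i(z)=\sum_mF_{i,m}z^{-m}$ and $K_i^\pm(z)=K_i^{\pm1}\exp(\pm(q-q^{-1})\sum_{m\ge1}H_{i,\pm m}z^{\mp m})$. The defining relations are: - $K_iK_i^{-1}=K_i^{-1}K_i=1$, and all coefficients of the $K_i^\pm(z)$ commute; - $(q^{a_{ij}}w-d^{m_{ij}}z)K_i^\pm(z)E_j(w)=(w-d^{m_{ij}}q^{a_{ij}}z)E_j(w)K_i^\pm(z)$; - $(w-d^{m_{ij}}q^{a_{ij}}z)K_i^\pm(z)F_j(w)=(q^{a_{ij}}w-d^{m_{ij}}z)F_j(w)K_i^\pm(z)$;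 - $[E_i(z),F_j(w)]=\frac{\delta_{ij}}{q-q^{-1}}(\delta(w/z)K_i^+(w)-\delta(z/w)K_i^-(z))$; - $(d^{m_{ij}}z-q^{a_{ij}}w)E_i(z)E_j(w)=(d^{m_{ij}}q^{a_{ij}}z-w)E_j(w)E_i(z)$; - $(d^{m_{ij}}z-q^{-a_{ij}}w)F_i(z)F_j(w)=(d^{m_{ij}}q^{-a_{ij}}z-w)F_j(w)F_i(z)$; - the Serre relations $E_i(z_1)E_i(z_2)E_{i\pm1}(w)-(q+q^{-1})E_i(z_1)E_{i\pm1}(w)E_i(z_2)+E_{i\pm1}(w)E_i(z_1)E_i(z_2)+(z_1\leftrightarrow z_2)=0$, and the same with $F$; - $[E_i(z),E_j(w)]=[F_i(z),F_j(w)]=0$ for $i\not\equiv j,j\pm1$. Put $\kappa=\prod_iK_i$. Terminology for a module $V$: - $V$ is weighted if the $K_i^\pm(z)$ are simultaneously diagonalizable, and tame if moreover the joint eigenspaces are one-dimensional. - $V$ has level $K$ if $\kappa^{-1}$ acts by $K$. - $V$ is $\mathbb Z^n$-graded if it is graded compatibly with $\deg E_{i,m}=1_i$, $\deg F_{i,m}=-1_i$ and $\deg H,\deg K=0$, where $1_0,\dots,1_{n-1}$ is the standard basis of $\mathbb Z^n$. *)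

theory Defs
  imports "HOL-Computational_Algebra.Formal_Power_Series"
begin

(* Vectors of V^(k)(u): coefficient functions j |-> coefficient of [u]_j;
   elements of V are those with finite support (set Vfin).
   Operators are functions vec => vec; relations are required on Vfin. *)
type_synonym vec = "int \<Rightarrow> complex"
type_synonym op = "vec \<Rightarrow> vec"

definition Vfin :: "vec set" where "Vfin = {v. finite {j. v j \<noteq> 0}}"
definition vzero :: vec where "vzero = (\<lambda>j. 0)"
definition oadd :: "op \<Rightarrow> op \<Rightarrow> op" where "oadd A B = (\<lambda>v j. A v j + B v j)"
definition osub :: "op \<Rightarrow> op \<Rightarrow> op" where "osub A B = (\<lambda>v j. A v j - B v j)"
definition osc :: "complex \<Rightarrow> op \<Rightarrow> op" where "osc c A = (\<lambda>v j. c * A v j)"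
definition ozero :: op where "ozero = (\<lambda>v j. 0)"
definition oeq :: "op \<Rightarrow> op \<Rightarrow> bool" where "oeq A B \<longleftrightarrow> (\<forall>v\<in>Vfin. A v = B v)"
definition ocomp_list :: "op list \<Rightarrow> op" where "ocomp_list As = foldr (\<circ>) As id"

definition lin_op :: "op \<Rightarrow> bool" where
  "lin_op A \<longleftrightarrow> (\<forall>v\<in>Vfin. A v \<in> Vfin) \<and>
     (\<forall>v\<in>Vfin. \<forall>w\<in>Vfin. A (\<lambda>j. v j + w j) = (\<lambda>j. A v j + A w j)) \<and>
     (\<forall>c. \<forall>v\<in>Vfin. A (\<lambda>j. c * v j) = (\<lambda>j. c * A v j))"

definition cong_n :: "nat \<Rightarrow> int \<Rightarrow> int \<Rightarrow> bool" where
  "cong_n n a b \<longleftrightarrow> a mod int n = b mod int n"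

definition cartan :: "nat \<Rightarrow> int \<Rightarrow> int \<Rightarrow> int" where
  "cartan n i j = (if cong_n n i j then 2
                   else if cong_n n i (j + 1) \<or> cong_n n i (j - 1) then -1 else 0)"

definition mmat :: "nat \<Rightarrow> int \<Rightarrow> int \<Rightarrow> int" where
  "mmat n i j = (if cong_n n i (j - 1) then -1 else if cong_n n i (j + 1) then 1 else 0)"

definition q1 :: "complex \<Rightarrow> complex \<Rightarrow> complex" where "q1 q d = d / q"
definition q2 :: "complex \<Rightarrow> complex \<Rightarrow> complex" where "q2 q d = q ^ 2"
definition q3 :: "complex \<Rightarrow> complex \<Rightarrow> complex" where "q3 q d = 1 / (d * q)"

definition generic :: "complex \<Rightarrow> complex \<Rightarrow> bool" where
  "generic q d \<longleftrightarrow> (\<forall>a b c :: int.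
      (q1 q d) powi a * (q2 q d) powi b * (q3 q d) powi c = 1 \<longrightarrow> a = b \<and> b = c)"

(* coefficient of z^{-r} in exp(sum_{m>=1} A_m z^{-m}) = sum_k (1/k!) (sum_m A_m z^{-m})^k *)
definition expcoef :: "(nat \<Rightarrow> op) \<Rightarrow> nat \<Rightarrow> op" where
  "expcoef A r = (\<lambda>v j. \<Sum>ms\<in>{ms. length ms \<le> r \<and> (\<forall>m\<in>set ms. 0 < m) \<and> sum_list ms = r}.
       (1 / fact (length ms)) * ocomp_list (map A ms) v j)"

(* Convention: K^+_i(z) = sum_r Kplus i r z^{-r} (zero for r<0),
   K^-_i(z) = sum_r Kminus i r z^{-r} (zero for r>0). *)
definition Kplus :: "complex \<Rightarrow> (int \<Rightarrow> op) \<Rightarrow> (int \<Rightarrow> int \<Rightarrow> op) \<Rightarrow> int \<Rightarrow> int \<Rightarrow> op" where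
  "Kplus q K H i r = (if r < 0 then ozero
      else K i \<circ> expcoef (\<lambda>m. osc (q - inverse q) (H i (int m))) (nat r))"

definition Kminus :: "complex \<Rightarrow> (int \<Rightarrow> op) \<Rightarrow> (int \<Rightarrow> int \<Rightarrow> op) \<Rightarrow> int \<Rightarrow> int \<Rightarrow> op" where
  "Kminus q Kinv H i r = (if 0 < r then ozero
      else Kinv i \<circ> expcoef (\<lambda>m. osc (- (q - inverse q)) (H i (- int m))) (nat (- r)))"

definition serre :: "complex \<Rightarrow> (int \<Rightarrow> int \<Rightarrow> op) \<Rightarrow> int \<Rightarrow> int \<Rightarrow> int \<Rightarrow> int \<Rightarrow> int \<Rightarrow> op" where
  "serre q X i j r1 r2 s =
     oadd (osub (X i r1 \<circ> X i r2 \<circ> X j s) (osc (q + inverse q) (X i r1 \<circ> X j s \<circ> X i r2)))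
          (X j s \<circ> X i r1 \<circ> X i r2)"

(* Module over E_n: action of generators E_{i,m}, F_{i,m}, H_{i,l} (l \<noteq> 0), K_i, K_i^{-1}
   (i in {0..n-1}) by linear operators on V satisfying the defining relations,
   the series relations being written coefficientwise. *)
definition En_module :: "nat \<Rightarrow> complex \<Rightarrow> complex \<Rightarrow> (int \<Rightarrow> int \<Rightarrow> op) \<Rightarrow> (int \<Rightarrow> int \<Rightarrow> op)
    \<Rightarrow> (int \<Rightarrow> int \<Rightarrow> op) \<Rightarrow> (int \<Rightarrow> op) \<Rightarrow> (int \<Rightarrow> op) \<Rightarrow> bool" where
  "En_module n q d E F H K Kinv \<longleftrightarrow>
    (let I = {0..<int n};
         KK = (\<lambda>s. if s then Kplus q K H else Kminus q Kinv H) in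
    (\<forall>i\<in>I. \<forall>m. lin_op (E i m) \<and> lin_op (F i m)) \<and>
    (\<forall>i\<in>I. \<forall>l. l \<noteq> 0 \<longrightarrow> lin_op (H i l)) \<and>
    (\<forall>i\<in>I. lin_op (K i) \<and> lin_op (Kinv i)) \<and>
    (\<forall>i\<in>I. oeq (K i \<circ> Kinv i) id \<and> oeq (Kinv i \<circ> K i) id) \<and>
    (\<forall>s t. \<forall>i\<in>I. \<forall>j\<in>I. \<forall>r r'. oeq (KK s i r \<circ> KK t j r') (KK t j r' \<circ> KK s i r)) \<and>
    (\<forall>s. \<forall>i\<in>I. \<forall>j\<in>I. \<forall>r r'.
       oeq (osub (osc (q powi cartan n i j) (KK s i r \<circ> E j (r' + 1)))
                 (osc (d powi mmat n i j) (KK s i (r + 1) \<circ> E j r')))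
           (osub (E j (r' + 1) \<circ> KK s i r)
                 (osc (d powi mmat n i j * q powi cartan n i j) (E j r' \<circ> KK s i (r + 1))))) \<and>
    (\<forall>s. \<forall>i\<in>I. \<forall>j\<in>I. \<forall>r r'.
       oeq (osub (KK s i r \<circ> F j (r' + 1))
                 (osc (d powi mmat n i j * q powi cartan n i j) (KK s i (r + 1) \<circ> F j r')))
           (osub (osc (q powi cartan n i j) (F j (r' + 1) \<circ> KK s i r))
                 (osc (d powi mmat n i j) (F j r' \<circ> KK s i (r + 1))))) \<and>
    (\<forall>i\<in>I. \<forall>j\<in>I. \<forall>a b.
       oeq (osub (E i a \<circ> F j b) (F j b \<circ> E i a))
           (if i = j then osc (inverse (q - inverse q)) (osub (KK True i (a + b)) (KK False i (a + b)))
            else ozero)) \<and>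
    (\<forall>i\<in>I. \<forall>j\<in>I. \<forall>r s.
       oeq (osub (osc (d powi mmat n i j) (E i (r + 1) \<circ> E j s))
                 (osc (q powi cartan n i j) (E i r \<circ> E j (s + 1))))
           (osub (osc (d powi mmat n i j * q powi cartan n i j) (E j s \<circ> E i (r + 1)))
                 (E j (s + 1) \<circ> E i r))) \<and>
    (\<forall>i\<in>I. \<forall>j\<in>I. \<forall>r s.
       oeq (osub (osc (d powi mmat n i j) (F i (r + 1) \<circ> F j s))
                 (osc (q powi (- cartan n i j)) (F i r \<circ> F j (s + 1))))
           (osub (osc (d powi mmat n i j * q powi (- cartan n i j)) (F j s \<circ> F i (r + 1)))
                 (F j (s + 1) \<circ> F i r))) \<and>
    (\<forall>i\<in>I. \<forall>j\<in>I. (cong_n n j (i + 1) \<or> cong_n n j (i - 1)) \<longrightarrow>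
       (\<forall>r1 r2 s. oeq (oadd (serre q E i j r1 r2 s) (serre q E i j r2 r1 s)) ozero \<and>
                  oeq (oadd (serre q F i j r1 r2 s) (serre q F i j r2 r1 s)) ozero)) \<and>
    (\<forall>i\<in>I. \<forall>j\<in>I. (\<not> cong_n n i j \<and> \<not> cong_n n i (j + 1) \<and> \<not> cong_n n i (j - 1)) \<longrightarrow>
       (\<forall>r s. oeq (E i r \<circ> E j s) (E j s \<circ> E i r) \<and> oeq (F i r \<circ> F j s) (F j s \<circ> F i r))))"

definition eigsp :: "nat \<Rightarrow> (int \<Rightarrow> int \<Rightarrow> op) \<Rightarrow> (int \<Rightarrow> int \<Rightarrow> op)
    \<Rightarrow> (bool \<Rightarrow> int \<Rightarrow> int \<Rightarrow> complex) \<Rightarrow> vec set" where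
  "eigsp n Kp Km lam = {v\<in>Vfin. \<forall>i\<in>{0..<int n}. \<forall>r.
      Kp i r v = (\<lambda>j. lam True i r * v j) \<and> Km i r v = (\<lambda>j. lam False i r * v j)}"

definition weighted :: "nat \<Rightarrow> (int \<Rightarrow> int \<Rightarrow> op) \<Rightarrow> (int \<Rightarrow> int \<Rightarrow> op) \<Rightarrow> bool" where
  "weighted n Kp Km \<longleftrightarrow> (\<forall>v\<in>Vfin. \<exists>ws. (\<forall>w\<in>set ws. \<exists>lam. w \<in> eigsp n Kp Km lam)
        \<and> v = (\<lambda>j. \<Sum>w\<leftarrow>ws. w j))"

definition tame :: "nat \<Rightarrow> (int \<Rightarrow> int \<Rightarrow> op) \<Rightarrow> (int \<Rightarrow> int \<Rightarrow> op) \<Rightarrow> bool" where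
  "tame n Kp Km \<longleftrightarrow> weighted n Kp Km \<and>
     (\<forall>lam. \<forall>v\<in>eigsp n Kp Km lam. \<forall>w\<in>eigsp n Kp Km lam.
        v \<noteq> vzero \<longrightarrow> (\<exists>c. w = (\<lambda>j. c * v j)))"

definition level :: "nat \<Rightarrow> (int \<Rightarrow> op) \<Rightarrow> complex \<Rightarrow> bool" where
  "level n Kinv c \<longleftrightarrow> (\<forall>v\<in>Vfin. ocomp_list (map (\<lambda>i. Kinv (int i)) [0..<n]) v = (\<lambda>j. c * v j))"

definition subspace_V :: "vec set \<Rightarrow> bool" where
  "subspace_V W \<longleftrightarrow> W \<subseteq> Vfin \<and> vzero \<in> W \<and> (\<forall>v\<in>W. \<forall>w\<in>W. (\<lambda>j. v j + w j) \<in> W)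
      \<and> (\<forall>c. \<forall>v\<in>W. (\<lambda>j. c * v j) \<in> W)"

definition irreducible_mod :: "nat \<Rightarrow> (int \<Rightarrow> int \<Rightarrow> op) \<Rightarrow> (int \<Rightarrow> int \<Rightarrow> op)
    \<Rightarrow> (int \<Rightarrow> int \<Rightarrow> op) \<Rightarrow> (int \<Rightarrow> op) \<Rightarrow> (int \<Rightarrow> op) \<Rightarrow> bool" where
  "irreducible_mod n E F H K Kinv \<longleftrightarrow> Vfin \<noteq> {vzero} \<and>
    (\<forall>W. subspace_V W \<and>
        (\<forall>i\<in>{0..<int n}. (\<forall>m. E i m ` W \<subseteq> W \<and> F i m ` W \<subseteq> W) \<and>
            (\<forall>l. l \<noteq> 0 \<longrightarrow> H i l ` W \<subseteq> W) \<and> K i ` W \<subseteq> W \<and> Kinv i ` W \<subseteq> W)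
      \<longrightarrow> W = {vzero} \<or> W = Vfin)"

(* Z^n-grading: degree of [u]_j, as function of the component a in {0..n-1} *)
definition deg :: "nat \<Rightarrow> int \<Rightarrow> int \<Rightarrow> int \<Rightarrow> int" where
  "deg n k j a = j div int n + (if (k - a) mod int n \<le> j mod int n then 1 else 0)"

definition Vhom :: "nat \<Rightarrow> (int \<Rightarrow> int \<Rightarrow> int) \<Rightarrow> (int \<Rightarrow> int) \<Rightarrow> vec set" where
  "Vhom n dg \<alpha> = {v\<in>Vfin. \<forall>j. v j \<noteq> 0 \<longrightarrow> (\<forall>a\<in>{0..<int n}. dg j a = \<alpha> a)}"

definition unitv :: "int \<Rightarrow> int \<Rightarrow> int" where "unitv i = (\<lambda>a. if a = i then 1 else 0)"

definition graded :: "nat \<Rightarrow> (int \<Rightarrow> int \<Rightarrow> int) \<Rightarrow> (int \<Rightarrow> int \<Rightarrow> op) \<Rightarrow> (int \<Rightarrow> int \<Rightarrow> op)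
    \<Rightarrow> (int \<Rightarrow> int \<Rightarrow> op) \<Rightarrow> (int \<Rightarrow> op) \<Rightarrow> (int \<Rightarrow> op) \<Rightarrow> bool" where
  "graded n dg E F H K Kinv \<longleftrightarrow> (\<forall>\<alpha>. \<forall>i\<in>{0..<int n}.
     (\<forall>m. \<forall>v\<in>Vhom n dg \<alpha>. E i m v \<in> Vhom n dg (\<lambda>a. \<alpha> a + unitv i a)
                        \<and> F i m v \<in> Vhom n dg (\<lambda>a. \<alpha> a - unitv i a)) \<and>
     (\<forall>l. l \<noteq> 0 \<longrightarrow> (\<forall>v\<in>Vhom n dg \<alpha>. H i l v \<in> Vhom n dg \<alpha>)) \<and>
     (\<forall>v\<in>Vhom n dg \<alpha>. K i v \<in> Vhom n dg \<alpha> \<and> Kinv i v \<in> Vhom n dg \<alpha>))"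

(* psi(x/z) expanded in z^{-1} (power series in t = z^{-1}) and in z (power series in z) *)
definition psi_plus :: "complex \<Rightarrow> complex \<Rightarrow> complex fps" where
  "psi_plus q x = (fps_const q - fps_const (x / q) * fps_X) * inverse (1 - fps_const x * fps_X)"
definition psi_minus :: "complex \<Rightarrow> complex \<Rightarrow> complex fps" where
  "psi_minus q x = (fps_const q * fps_X - fps_const (x / q)) * inverse (fps_X - fps_const x)"

definition VE :: "nat \<Rightarrow> complex \<Rightarrow> complex \<Rightarrow> int \<Rightarrow> complex \<Rightarrow> int \<Rightarrow> int \<Rightarrow> op" where
  "VE n q d k u i m = (\<lambda>v j. if cong_n n (i + j) k
       then ((q1 q d) powi j * u) powi m * v (j - 1) else 0)"
definition VF :: "nat \<Rightarrow> complex \<Rightarrow> complex \<Rightarrow> int \<Rightarrow> complex \<Rightarrow> int \<Rightarrow> int \<Rightarrow> op" where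
  "VF n q d k u i m = (\<lambda>v j. if cong_n n (i + j + 1) k
       then ((q1 q d) powi (j + 1) * u) powi m * v (j + 1) else 0)"

definition kpc :: "nat \<Rightarrow> complex \<Rightarrow> complex \<Rightarrow> int \<Rightarrow> complex \<Rightarrow> int \<Rightarrow> int \<Rightarrow> nat \<Rightarrow> complex" where
  "kpc n q d k u i j r = (if cong_n n (j + i) k then fps_nth (psi_plus q ((q1 q d) powi j * u)) r
      else if cong_n n (j + i + 1) k
        then fps_nth (inverse (psi_plus q ((q1 q d) powi j * inverse (q3 q d) * u))) r
      else (if r = 0 then 1 else 0))"
definition kmc :: "nat \<Rightarrow> complex \<Rightarrow> complex \<Rightarrow> int \<Rightarrow> complex \<Rightarrow> int \<Rightarrow> int \<Rightarrow> nat \<Rightarrow> complex" where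
  "kmc n q d k u i j r = (if cong_n n (j + i) k then fps_nth (psi_minus q ((q1 q d) powi j * u)) r
      else if cong_n n (j + i + 1) k
        then fps_nth (inverse (psi_minus q ((q1 q d) powi j * inverse (q3 q d) * u))) r
      else (if r = 0 then 1 else 0))"

definition VKp :: "nat \<Rightarrow> complex \<Rightarrow> complex \<Rightarrow> int \<Rightarrow> complex \<Rightarrow> int \<Rightarrow> int \<Rightarrow> op" where
  "VKp n q d k u i r = (\<lambda>v j. (if r < 0 then 0 else kpc n q d k u i j (nat r)) * v j)"
definition VKm :: "nat \<Rightarrow> complex \<Rightarrow> complex \<Rightarrow> int \<Rightarrow> complex \<Rightarrow> int \<Rightarrow> int \<Rightarrow> op" where
  "VKm n q d k u i r = (\<lambda>v j. (if 0 < r then 0 else kmc n q d k u i j (nat (- r))) * v j)"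

end

theory Submission
  imports Defs
begin

(* The generators act on the basis [u]_j by weighted shifts: E_i(z) and F_i(z) move j by +1 and
   -1, are nonzero only on one residue class of i + j mod n, and carry a delta function at the
   spectral parameter q_1^j u, while K_i^+-(z) is diagonal with eigenvalues expansions of psi or
   psi^-1.  Every defining relation therefore reduces, basis vector by basis vector, to an identity
   between scalar series, checked according to the position of i relative to j mod n; the H_{i,l}
   are read off from formal logarithms of these diagonal series.  Genericity of q_1 makes the
   spectral parameters pairwise distinct, so the eigenvalues of the K_i^+-(z) separate the basis
   vectors, which gives tameness and, together with the shifts, irreducibility.  On [u]_j only
   K_{k-j}^-1 and K_{k-j-1}^-1 act nontrivially, by q^-1 and q, so the level is 1. *)

unbundle fps_syntax

section \<open>Finitely supported sequences and diagonal operators\<close>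

definition diag_op :: "(int \<Rightarrow> complex) \<Rightarrow> op" where
  "diag_op f = (\<lambda>v j. f j * v j)"

lemma lin_op_weighted_shift: "lin_op (\<lambda>v l. c l * v (l + s))"
proof -
  have "(\<lambda>l. c l * v (l + s)) \<in> Vfin" if "v \<in> Vfin" for v
  proof -
    have "{l. c l * v (l + s) \<noteq> 0} \<subseteq> (\<lambda>j. j - s) ` {j. v j \<noteq> 0}"
      by (auto intro!: image_eqI[where x = "_ + s"])
    moreover have "finite ((\<lambda>j. j - s) ` {j. v j \<noteq> 0})"
      using that by (simp add: Vfin_def)
    ultimately show ?thesis
      unfolding Vfin_def by (auto intro: finite_subset)
  qed
  then show ?thesis
    unfolding lin_op_def by (auto simp: fun_eq_iff algebra_simps)
qed

lemma diag_op_comp: "diag_op f \<circ> diag_op g = diag_op (\<lambda>j. f j * g j)"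
  by (simp add: diag_op_def fun_eq_iff mult.assoc)

lemma diag_op_one: "diag_op (\<lambda>j. 1) = id"
  by (simp add: diag_op_def fun_eq_iff)

lemma lin_op_diag_op: "lin_op (diag_op f)"
  using lin_op_weighted_shift[of f 0] by (simp add: diag_op_def)

lemma diag_op_Vhom: "v \<in> Vhom n dg \<alpha> \<Longrightarrow> diag_op f v \<in> Vhom n dg \<alpha>"
  using lin_op_diag_op[of f] unfolding Vhom_def lin_op_def by (auto simp: diag_op_def)

lemma ocomp_list_diag_op:
  assumes "\<forall>m\<in>set ms. A m = diag_op (h m)"
  shows "ocomp_list (map A ms) = diag_op (\<lambda>j. \<Prod>m\<leftarrow>ms. h m j)"
  using assms
  by (induction ms) (auto simp: ocomp_list_def diag_op_def fun_eq_iff mult.assoc)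

definition basis_vec :: "int \<Rightarrow> vec" where
  "basis_vec j = (\<lambda>l. if l = j then 1 else 0)"

lemma basis_vec_Vfin: "basis_vec j \<in> Vfin"
proof -
  have "{l. basis_vec j l \<noteq> 0} \<subseteq> {j}" by (auto simp: basis_vec_def)
  then show ?thesis unfolding Vfin_def by (auto intro: finite_subset)
qed

lemma subspace_V_eq_Vfin:
  assumes W: "subspace_V W" and basis: "\<And>j. basis_vec j \<in> W"
  shows "W = Vfin"
proof
  show "W \<subseteq> Vfin" using W by (simp add: subspace_V_def)
  have add: "\<forall>v\<in>W. \<forall>w\<in>W. (\<lambda>j. v j + w j) \<in> W" and smult: "\<forall>c. \<forall>v\<in>W. (\<lambda>j. c * v j) \<in> W"
    using W by (simp_all add: subspace_V_def)
  have restrict: "(\<lambda>l. if l \<in> S then v l else 0) \<in> W" if "finite S" for v S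
    using that
  proof (induction S rule: finite_induct)
    case empty
    then show ?case using W by (simp add: subspace_V_def vzero_def)
  next
    case (insert x S)
    have "(\<lambda>l. (if l \<in> S then v l else 0) + v x * basis_vec x l) \<in> W"
      by (rule add[rule_format, OF insert.IH smult[rule_format, OF basis]])
    moreover have "(\<lambda>l. (if l \<in> S then v l else 0) + v x * basis_vec x l)
        = (\<lambda>l. if l \<in> insert x S then v l else 0)"
      using insert.hyps(2) by (auto simp: basis_vec_def fun_eq_iff)
    ultimately show ?case by simp
  qed
  show "Vfin \<subseteq> W"
  proof
    fix v assume "v \<in> Vfin"
    then have "(\<lambda>l. if l \<in> {l. v l \<noteq> 0} then v l else 0) \<in> W"
      by (intro restrict) (simp add: Vfin_def)
    moreover have "(\<lambda>l. if l \<in> {l. v l \<noteq> 0} then v l else 0) = v" by auto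
    ultimately show "v \<in> W" by simp
  qed
qed

section \<open>Exponentials of formal power series\<close>

lemma finite_lists_length_sum: "finite {ms :: nat list. length ms = k \<and> sum_list ms = r}"
proof (rule finite_subset)
  show "{ms :: nat list. length ms = k \<and> sum_list ms = r} \<subseteq> {ms. set ms \<subseteq> {0..r} \<and> length ms = k}"
    by (auto simp: member_le_sum_list)
  show "finite {ms. set ms \<subseteq> {0..r} \<and> length ms = k}"
    by (rule finite_lists_length_eq) simp
qed

lemma fps_power_nth_lists:
  fixes G :: "'a :: comm_ring_1 fps"
  shows "(G ^ k) $ r = (\<Sum>ms\<in>{ms. length ms = k \<and> sum_list ms = r}. \<Prod>m\<leftarrow>ms. G $ m)"
proof (cases "k = 0")
  case True
  then have "{ms :: nat list. length ms = k \<and> sum_list ms = r} = (if r = 0 then {[]} else {})"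
    by auto
  then show ?thesis using True by simp
next
  case False
  have "(G ^ k) $ r = (\<Sum>v\<in>natpermute r k. \<Prod>j\<in>{0..k - 1}. G $ (v ! j))"
    using False by (simp add: fps_power_nth)
  also have "\<dots> = (\<Sum>v\<in>natpermute r k. \<Prod>m\<leftarrow>v. G $ m)"
  proof (rule sum.cong)
    fix v assume "v \<in> natpermute r k"
    then have "length v = k" by (simp add: natpermute_def)
    then have "{0..k - 1} = {0..<length v}" using False by (cases k) auto
    then show "(\<Prod>j\<in>{0..k - 1}. G $ (v ! j)) = (\<Prod>m\<leftarrow>v. G $ m)"
      by (simp add: prod.list_conv_set_nth)
  qed simp
  finally show ?thesis by (simp add: natpermute_def)
qed

lemma fps_exp_compose_nth:
  fixes G :: "complex fps"
  assumes G0: "G $ 0 = 0"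
  shows "(fps_exp 1 oo G) $ r =
    (\<Sum>ms\<in>{ms. length ms \<le> r \<and> (\<forall>m\<in>set ms. 0 < m) \<and> sum_list ms = r}.
       1 / fact (length ms) * (\<Prod>m\<leftarrow>ms. G $ m))"
proof -
  define S where "S = {ms. length ms \<le> r \<and> (\<forall>m\<in>set ms. 0 < m) \<and> sum_list ms = r}"
  let ?f = "\<lambda>ms. 1 / fact (length ms) * (\<Prod>m\<leftarrow>ms. G $ m)"
  let ?T = "\<lambda>k. {ms :: nat list. length ms = k \<and> sum_list ms = r}"
  have finS: "finite S"
    by (rule finite_subset[of _ "\<Union>k\<in>{0..r}. ?T k"]) (auto simp: S_def finite_lists_length_sum)
  have "(\<Sum>ms\<in>S. ?f ms) = (\<Sum>ms\<in>S. \<Sum>k\<in>{0..r}. if length ms = k then ?f ms else 0)"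
    by (intro sum.cong) (auto simp: S_def)
  also have "\<dots> = (\<Sum>k\<in>{0..r}. \<Sum>ms\<in>S. if length ms = k then ?f ms else 0)"
    by (rule sum.swap)
  also have "\<dots> = (\<Sum>k\<in>{0..r}. 1 / fact k * (G ^ k) $ r)"
  proof (rule sum.cong)
    fix k assume k: "k \<in> {0..r}"
    have "(\<Sum>ms\<in>S. if length ms = k then ?f ms else 0) = (\<Sum>ms\<in>{ms\<in>S. length ms = k}. ?f ms)"
      using finS by (rule sum.inter_filter[symmetric])
    also have "{ms\<in>S. length ms = k} = {ms\<in>?T k. \<forall>m\<in>set ms. 0 < m}"
      using k by (auto simp: S_def)
    also have "(\<Sum>ms\<in>{ms\<in>?T k. \<forall>m\<in>set ms. 0 < m}. ?f ms) = (\<Sum>ms\<in>?T k. ?f ms)"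
      \<comment> \<open>lists containing a zero part contribute nothing since \<open>G $ 0 = 0\<close>\<close>
    proof (rule sum.mono_neutral_left)
      show "\<forall>ms\<in>?T k - {ms\<in>?T k. \<forall>m\<in>set ms. 0 < m}. ?f ms = 0"
        using G0 by (auto simp: prod_list_zero_iff)
    qed (auto simp: finite_lists_length_sum)
    finally show "(\<Sum>ms\<in>S. if length ms = k then ?f ms else 0) = 1 / fact k * (G ^ k) $ r"
      by (simp add: fps_power_nth_lists sum_distrib_left)
  qed simp
  also have "\<dots> = (fps_exp 1 oo G) $ r"
    by (simp add: fps_compose_nth)
  finally show ?thesis by (simp add: S_def)
qed

lemma expcoef_diag_op:
  assumes "\<And>m. 0 < m \<Longrightarrow> A m = diag_op (\<lambda>j. G j $ m)" and "\<And>j. G j $ 0 = 0"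
  shows "expcoef A r = diag_op (\<lambda>j. (fps_exp 1 oo G j) $ r)"
proof -
  have "ocomp_list (map A ms) = diag_op (\<lambda>j. \<Prod>m\<leftarrow>ms. G j $ m)" if "\<forall>m\<in>set ms. 0 < m" for ms
    using that assms(1) by (intro ocomp_list_diag_op) auto
  then show ?thesis
    unfolding expcoef_def fps_exp_compose_nth[OF assms(2)]
    by (auto simp: diag_op_def fun_eq_iff sum_distrib_right mult.assoc intro!: sum.cong)
qed

lemma ex_fps_exp_compose_eq:
  fixes Q :: "complex fps"
  assumes "Q $ 0 = 1"
  shows "\<exists>g. g $ 0 = 0 \<and> fps_exp 1 oo g = Q"
proof (intro exI conjI)
  let ?b = "fps_exp (1::complex) - 1"
  have Q0: "(Q - 1) $ 0 = 0" using assms by simp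
  show "(fps_ln 1 oo (Q - 1)) $ 0 = 0" by simp
  have "fps_exp 1 oo (fps_ln 1 oo (Q - 1)) = (fps_exp 1 oo fps_ln 1) oo (Q - 1)"
    by (rule fps_compose_assoc) (use Q0 in simp_all)
  also have "fps_exp (1::complex) oo fps_ln 1 = (?b + 1) oo fps_inv ?b"
    by (simp add: fps_ln_fps_exp_inv)
  also have "\<dots> = (?b oo fps_inv ?b) + (1 oo fps_inv ?b)"
    by (rule fps_compose_add_distrib)
  also have "\<dots> = fps_X + 1"
    using fps_inv_right[of ?b] by simp
  also have "(fps_X + 1) oo (Q - 1) = Q"
    using Q0 by (simp add: fps_compose_add_distrib)
  finally show "fps_exp 1 oo (fps_ln 1 oo (Q - 1)) = Q" .
qed

section \<open>Expansions of \<open>\<psi>\<close>\<close>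

text \<open>Every expansion of \<open>\<psi>\<close> or \<open>\<psi>\<^sup>-\<^sup>1\<close> used below has the coefficient sequence of
  \<open>a + b (c t + c\<^sup>2 t\<^sup>2 + \<dots>)\<close>.\<close>

definition geom_coeff :: "complex \<Rightarrow> complex \<Rightarrow> complex \<Rightarrow> nat \<Rightarrow> complex" where
  "geom_coeff a b c r = (if r = 0 then a else b * c ^ r)"

lemma fps_inverse_const_minus_X:
  fixes a b :: complex
  assumes "a \<noteq> 0"
  shows "inverse (fps_const a - fps_const b * fps_X) = Abs_fps (\<lambda>m. b ^ m / a ^ Suc m)"
proof (rule fps_inverse_unique, rule fps_ext)
  fix m
  show "((fps_const a - fps_const b * fps_X) * Abs_fps (\<lambda>m. b ^ m / a ^ Suc m)) $ m = 1 $ m"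
    using assms by (cases m) (simp_all add: algebra_simps mult.assoc)
qed

lemma fps_const_minus_X_mult_nth:
  fixes a b :: complex
  shows "((fps_const a - fps_const b * fps_X) * F) $ r
      = a * F $ r - (if r = 0 then 0 else b * F $ (r - 1))"
proof -
  have "(fps_const a - fps_const b * fps_X) * F = fps_const a * F - fps_const b * (fps_X * F)"
    by (simp add: algebra_simps)
  then show ?thesis by simp
qed

lemma psi_plus_nth:
  assumes "q \<noteq> 0"
  shows "psi_plus q x $ r = geom_coeff q (q - inverse q) x r"
proof -
  have eq: "psi_plus q x = (fps_const q - fps_const (x / q) * fps_X) * Abs_fps (\<lambda>m. x ^ m)"
    unfolding psi_plus_def using fps_inverse_const_minus_X[of 1 x]
    by (simp add: fps_const_1_eq_1[symmetric] del: fps_const_1_eq_1)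
  show ?thesis
    unfolding eq using assms
    by (cases r) (simp_all add: fps_const_minus_X_mult_nth geom_coeff_def field_simps)
qed

lemma inverse_psi_plus_nth:
  assumes "q \<noteq> 0"
  shows "inverse (psi_plus q y) $ r = geom_coeff (inverse q) (- (q - inverse q)) (y / q\<^sup>2) r"
proof -
  have "(1 - fps_const y * fps_X) $ 0 \<noteq> 0" by simp
  then have eq: "inverse (psi_plus q y) =
      (fps_const 1 - fps_const y * fps_X) * Abs_fps (\<lambda>m. (y / q) ^ m / q ^ Suc m)"
    unfolding psi_plus_def fps_inverse_mult fps_inverse_idempotent
      fps_inverse_const_minus_X[OF assms]
    by (simp add: mult.commute)
  show ?thesis
    unfolding eq using assms
    by (cases r) (simp_all add: fps_const_minus_X_mult_nth geom_coeff_def field_simps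
        power_divide power_mult_distrib power2_eq_square)
qed

lemma fps_inverse_const_X_minus_const:
  fixes a c :: complex
  assumes "a \<noteq> 0"
  shows "inverse (fps_const c * fps_X - fps_const a) = Abs_fps (\<lambda>m. - (c ^ m) / a ^ Suc m)"
proof (rule fps_inverse_unique, rule fps_ext)
  have *: "(fps_const c * fps_X - fps_const a) * F = fps_const c * (fps_X * F) - fps_const a * F"
    for F :: "complex fps"
    by (simp add: algebra_simps)
  fix m
  show "((fps_const c * fps_X - fps_const a) * Abs_fps (\<lambda>m. - (c ^ m) / a ^ Suc m)) $ m = 1 $ m"
    unfolding * using assms by (cases m) (simp_all add: field_simps)
qed

lemma psi_minus_nth:
  assumes "q \<noteq> 0" "x \<noteq> 0"
  shows "psi_minus q x $ r = geom_coeff (inverse q) (- (q - inverse q)) (inverse x) r"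
proof -
  have eq: "psi_minus q x =
      - ((fps_const (x / q) - fps_const q * fps_X) * Abs_fps (\<lambda>m. - (1 ^ m) / x ^ Suc m))"
    unfolding psi_minus_def using fps_inverse_const_X_minus_const[OF assms(2), of 1]
    by (simp add: algebra_simps)
  show ?thesis
    unfolding eq using assms
    by (cases r) (simp_all add: fps_const_minus_X_mult_nth geom_coeff_def field_simps power_divide)
qed

lemma inverse_psi_minus_nth:
  assumes "q \<noteq> 0" "y \<noteq> 0"
  shows "inverse (psi_minus q y) $ r = geom_coeff q (q - inverse q) (q\<^sup>2 / y) r"
proof -
  have y: "(fps_X - fps_const y) $ 0 \<noteq> 0" using assms by simp
  have yq: "y / q \<noteq> 0" using assms by simp
  have eq: "inverse (psi_minus q y) =
      - ((fps_const y - fps_const 1 * fps_X) * Abs_fps (\<lambda>m. - (q ^ m) / (y / q) ^ Suc m))"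
    unfolding psi_minus_def fps_inverse_mult fps_inverse_idempotent[OF y]
      fps_inverse_const_X_minus_const[OF yq]
    by (simp add: algebra_simps)
  show ?thesis
    unfolding eq using assms
    by (cases r) (simp_all add: fps_const_minus_X_mult_nth geom_coeff_def field_simps
        power_divide power_mult_distrib power2_eq_square)
qed

lemma geom_coeff_plus_relation:
  fixes A D x a1 b1 c1 a0 b0 c0 :: complex
  assumes "D * a1 = D * A * a0"
    and "A * x * a1 - D * (b1 * c1) = x * a0 - D * A * (b0 * c0)"
    and "\<And>t. 0 < t \<Longrightarrow> A * x * (b1 * c1 ^ t) - D * (b1 * c1 ^ Suc t)
                        = x * (b0 * c0 ^ t) - D * A * (b0 * c0 ^ Suc t)"
  shows "A * x * (if r < 0 then 0 else geom_coeff a1 b1 c1 (nat r))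
           - D * (if r + 1 < 0 then 0 else geom_coeff a1 b1 c1 (nat (r + 1)))
       = x * (if r < 0 then 0 else geom_coeff a0 b0 c0 (nat r))
           - D * A * (if r + 1 < 0 then 0 else geom_coeff a0 b0 c0 (nat (r + 1)))"
proof -
  consider "r < -1" | "r = -1" | "r = 0" | "r > 0" by linarith
  then show ?thesis
  proof cases
    case 1 then show ?thesis by simp
  next
    case 2 then show ?thesis using assms(1) by (simp add: geom_coeff_def)
  next
    case 3 then show ?thesis using assms(2) by (simp add: geom_coeff_def)
  next
    case 4
    define t where "t = nat r"
    have t: "r = int t" "0 < t" using 4 by (auto simp: t_def)
    have "nat (r + 1) = Suc t" using t by simp
    then show ?thesis using t assms(3)[OF t(2)] by (simp add: geom_coeff_def)
  qed
qed

lemma geom_coeff_minus_relation: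
  fixes A D x a1 b1 c1 a0 b0 c0 :: complex
  assumes "A * x * a1 = x * a0"
    and "A * x * (b1 * c1) - D * a1 = x * (b0 * c0) - D * A * a0"
    and "\<And>t. 0 < t \<Longrightarrow> A * x * (b1 * c1 ^ Suc t) - D * (b1 * c1 ^ t)
                        = x * (b0 * c0 ^ Suc t) - D * A * (b0 * c0 ^ t)"
  shows "A * x * (if 0 < r then 0 else geom_coeff a1 b1 c1 (nat (- r)))
           - D * (if 0 < r + 1 then 0 else geom_coeff a1 b1 c1 (nat (- (r + 1))))
       = x * (if 0 < r then 0 else geom_coeff a0 b0 c0 (nat (- r)))
           - D * A * (if 0 < r + 1 then 0 else geom_coeff a0 b0 c0 (nat (- (r + 1))))"
proof -
  consider "r > 0" | "r = 0" | "r = -1" | "r < -1" by linarith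
  then show ?thesis
  proof cases
    case 1 then show ?thesis by simp
  next
    case 2 then show ?thesis using assms(1) by (simp add: geom_coeff_def)
  next
    case 3 then show ?thesis using assms(2) by (simp add: geom_coeff_def)
  next
    case 4
    define t where "t = nat (- (r + 1))"
    have t: "- (r + 1) = int t" "0 < t" using 4 by (auto simp: t_def)
    have "nat (- r) = Suc t" "nat (- (r + 1)) = t" using t by simp_all
    then show ?thesis using t assms(3)[OF t(2)] by (simp add: geom_coeff_def)
  qed
qed

section \<open>Arithmetic modulo \<open>n\<close>\<close>

lemma cong_n_iff_dvd: "cong_n n a b \<longleftrightarrow> int n dvd a - b"
  by (simp add: cong_n_def mod_eq_dvd_iff)

lemma cong_n_transfer:
  "cong_n n a b \<Longrightarrow> c - e = f - g + (a - b) \<Longrightarrow> cong_n n c e \<longleftrightarrow> cong_n n f g"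
  unfolding cong_n_iff_dvd by (metis dvd_add_left_iff dvd_add_right_iff)

lemma cong_n_diff: "cong_n n x y \<Longrightarrow> cong_n n x' y' \<Longrightarrow> (x - y) - (x' - y') = a - b \<Longrightarrow> cong_n n a b"
  unfolding cong_n_iff_dvd by (metis dvd_diff)

lemma cong_n_eq_in_range: "i \<in> {0..<int n} \<Longrightarrow> j \<in> {0..<int n} \<Longrightarrow> cong_n n i j \<Longrightarrow> i = j"
  by (simp add: cong_n_def)

lemma cong_n_diff_small:
  assumes "cong_n n a b" "cong_n n c e" "\<bar>(c - e) - (a - b)\<bar> < int n"
  shows "c - e = a - b"
proof -
  have "int n dvd (c - e) - (a - b)"
    using assms(1,2) unfolding cong_n_iff_dvd by (rule dvd_diff[rotated])
  then show ?thesis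
    using assms(3) by (smt (verit) dvd_imp_le_int)
qed

lemma cong_n_add_iff_eq:
  assumes "m < n"
  shows "cong_n n (j + int m + c) k \<longleftrightarrow> m = nat ((k - j - c) mod int n)"
proof -
  have "cong_n n (j + int m + c) k \<longleftrightarrow> cong_n n (int m) (k - j - c)"
    unfolding cong_n_iff_dvd by (simp add: algebra_simps)
  also have "\<dots> \<longleftrightarrow> int m = (k - j - c) mod int n"
    using assms by (simp add: cong_n_def)
  also have "\<dots> \<longleftrightarrow> m = nat ((k - j - c) mod int n)"
    using assms by (auto simp: nat_eq_iff)
  finally show ?thesis .
qed

lemma div_eq_pred_div:
  fixes m N :: int
  assumes N: "0 < N"
  shows "m div N = (m - 1) div N + (if N dvd m then 1 else 0)"
proof -
  have "m - 1 = (m mod N - 1) + N * (m div N)" by simp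
  then have "(m - 1) div N = ((m mod N - 1) + N * (m div N)) div N" by (rule arg_cong)
  also have "\<dots> = (m mod N - 1) div N + m div N"
    using N by (simp only: div_mult_self2)
  also have "(m mod N - 1) div N = (if N dvd m then -1 else 0)"
  proof (cases "N dvd m")
    case True then show ?thesis using N by (simp add: dvd_eq_mod_eq_0 div_eq_minus1)
  next
    case False then have "0 \<le> m mod N - 1" "m mod N - 1 < N"
      using N pos_mod_bound[OF N, of m] pos_mod_sign[OF N, of m] by (auto simp: dvd_eq_mod_eq_0)
    then show ?thesis using False by (simp add: div_pos_pos_trivial)
  qed
  finally show ?thesis by simp
qed

text \<open>The degree of \<open>[u]\<^sub>j\<close> in direction \<open>a\<close> counts the \<open>j' \<le> j\<close> with
  \<open>j' \<equiv> k - a\<close>, up to a constant.\<close>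

lemma deg_eq_div:
  assumes "0 < n"
  shows "deg n k l a = (l - (k - a) mod int n) div int n + 1"
proof -
  define c where "c = (k - a) mod int n"
  have c: "0 \<le> c" "c < int n" using assms by (simp_all add: c_def)
  have "l - c = (l mod int n - c) + int n * (l div int n)" by simp
  then have "(l - c) div int n = ((l mod int n - c) + int n * (l div int n)) div int n"
    by (rule arg_cong)
  also have "\<dots> = (l mod int n - c) div int n + l div int n"
    using assms by (simp only: div_mult_self2)
  also have "(l mod int n - c) div int n = (if c \<le> l mod int n then 0 else -1)"
  proof (cases "c \<le> l mod int n")
    case True
    have "l mod int n < int n" using assms by simp
    then have "0 \<le> l mod int n - c" "l mod int n - c < int n" using True c by linarith+
    then show ?thesis using True by (simp add: div_pos_pos_trivial)
  next
    case False then show ?thesis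
      using c assms pos_mod_sign[of "int n" l]
      by (simp, smt (verit) div_minus_minus div_pos_neg_trivial)
  qed
  finally show ?thesis by (simp add: deg_def c_def)
qed

lemma deg_eq_deg_pred:
  assumes "0 < n"
  shows "deg n k l a = deg n k (l - 1) a + (if cong_n n l (k - a) then 1 else 0)"
proof -
  have "cong_n n l (k - a) \<longleftrightarrow> int n dvd l - (k - a) mod int n"
    by (simp add: cong_n_def mod_eq_dvd_iff[symmetric])
  then show ?thesis
    using div_eq_pred_div[of "int n" "l - (k - a) mod int n"] assms
    by (simp add: deg_eq_div algebra_simps)
qed

section \<open>The module \<open>V\<^sup>(\<^sup>k\<^sup>)(u)\<close>\<close>

locale Vk_module =
  fixes n :: nat and q d u :: complex and k :: int
  assumes n_ge_3: "n \<ge> 3" and q_ne_0: "q \<noteq> 0" and d_ne_0: "d \<noteq> 0"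
    and generic: "generic q d" and u_ne_0: "u \<noteq> 0"
begin

abbreviation qq :: complex where "qq \<equiv> q - inverse q"

text \<open>The delta functions in \<open>E\<^sub>i(z)[u]\<^sub>j\<^sub>-\<^sub>1\<close> and \<open>F\<^sub>i(z)[u]\<^sub>j\<close> sit at \<open>z = \<xi> j\<close>.\<close>

definition \<xi> :: "int \<Rightarrow> complex" where
  "\<xi> j = q1 q d powi j * u"

lemma q1_ne_0: "q1 q d \<noteq> 0"
  using q_ne_0 d_ne_0 by (simp add: q1_def)

lemma \<xi>_ne_0: "\<xi> j \<noteq> 0"
  using q1_ne_0 u_ne_0 by (simp add: \<xi>_def)

lemma \<xi>_succ: "\<xi> (j + 1) = d / q * \<xi> j"
  using q1_ne_0 by (simp add: \<xi>_def power_int_add q1_def)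

lemma \<xi>_powi_succ: "\<xi> j powi (m + 1) = \<xi> j powi m * \<xi> j"
  using \<xi>_ne_0 by (simp add: power_int_add)

lemma \<xi>_shifted: "q1 q d powi j * inverse (q3 q d) * u = q\<^sup>2 * \<xi> (j + 1)"
  using q_ne_0 d_ne_0 q1_ne_0
  by (simp add: \<xi>_def power_int_add q1_def q3_def field_simps power2_eq_square)

lemma generic_exponents: "q1 q d powi a * (q ^ 2) powi b * q3 q d powi c = 1 \<Longrightarrow> a = b \<and> b = c"
  using generic by (simp add: generic_def q2_def)

lemma q_sq_ne_1: "q\<^sup>2 \<noteq> 1"
  using generic_exponents[of 0 1 0] by auto

lemma qq_ne_0: "qq \<noteq> 0"
proof
  assume "qq = 0"
  then have "q * q = 1" using q_ne_0 by (simp add: field_simps)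
  then show False using q_sq_ne_1 by (simp add: power2_eq_square)
qed

lemma q_ne_1: "q \<noteq> 1"
  using q_sq_ne_1 by auto

lemma \<xi>_inj: "\<xi> a = \<xi> b \<Longrightarrow> a = b"
proof -
  assume "\<xi> a = \<xi> b"
  then have "q1 q d powi (a - b) = 1"
    using u_ne_0 q1_ne_0 by (simp add: \<xi>_def power_int_diff)
  then show "a = b" using generic_exponents[of "a - b" 0 0] by simp
qed

lemma not_cong_n_near:
  assumes "cong_n n a b" "c - e = a - b + t" "t \<in> {1, 2, -1, -2}"
  shows "\<not> cong_n n c e"
proof
  assume "cong_n n c e"
  with assms(1) have "c - e = a - b"
    by (rule cong_n_diff_small) (use assms(2,3) n_ge_3 in auto)
  with assms(2,3) show False by auto
qed

lemma cartan_cases: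
  obtains (same) "cong_n n i j" "\<not> cong_n n i (j + 1)" "\<not> cong_n n i (j - 1)"
      "cartan n i j = 2" "mmat n i j = 0"
  | (succ) "cong_n n i (j + 1)" "\<not> cong_n n i j" "\<not> cong_n n i (j - 1)"
      "cartan n i j = -1" "mmat n i j = 1"
  | (pred) "cong_n n i (j - 1)" "\<not> cong_n n i j" "\<not> cong_n n i (j + 1)"
      "cartan n i j = -1" "mmat n i j = -1"
  | (far) "\<not> cong_n n i j" "\<not> cong_n n i (j + 1)" "\<not> cong_n n i (j - 1)"
      "cartan n i j = 0" "mmat n i j = 0"
proof -
  have "cong_n n i j \<Longrightarrow> \<not> cong_n n i (j + 1) \<and> \<not> cong_n n i (j - 1)"
    using not_cong_n_near[of i j i "j + 1" "-1"] not_cong_n_near[of i j i "j - 1" 1] by auto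
  moreover have "cong_n n i (j + 1) \<Longrightarrow> \<not> cong_n n i (j - 1)"
    using not_cong_n_near[of i "j + 1" i "j - 1" 2] by auto
  ultimately show ?thesis
    using that by (auto simp: cartan_def mmat_def)
qed

definition Kp_eig :: "int \<Rightarrow> int \<Rightarrow> int \<Rightarrow> complex" where
  "Kp_eig i j r = (if r < 0 then 0 else kpc n q d k u i j (nat r))"

definition Km_eig :: "int \<Rightarrow> int \<Rightarrow> int \<Rightarrow> complex" where
  "Km_eig i j r = (if 0 < r then 0 else kmc n q d k u i j (nat (- r)))"

lemma VKp_eq_diag_op: "VKp n q d k u i r = diag_op (\<lambda>j. Kp_eig i j r)"
  by (simp add: VKp_def Kp_eig_def diag_op_def)

lemma VKm_eq_diag_op: "VKm n q d k u i r = diag_op (\<lambda>j. Km_eig i j r)"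
  by (simp add: VKm_def Km_eig_def diag_op_def)

lemma kpc_eq_geom_coeff:
  "kpc n q d k u i j s =
    (if cong_n n (j + i) k then geom_coeff q qq (\<xi> j) s
     else if cong_n n (j + i + 1) k then geom_coeff (inverse q) (- qq) (\<xi> (j + 1)) s
     else geom_coeff 1 0 0 s)"
  using q_ne_0 \<xi>_ne_0 unfolding kpc_def
  by (simp add: psi_plus_nth inverse_psi_plus_nth \<xi>_shifted \<xi>_def[symmetric] geom_coeff_def)

lemma kmc_eq_geom_coeff:
  "kmc n q d k u i j s =
    (if cong_n n (j + i) k then geom_coeff (inverse q) (- qq) (inverse (\<xi> j)) s
     else if cong_n n (j + i + 1) k then geom_coeff q qq (inverse (\<xi> (j + 1))) s
     else geom_coeff 1 0 0 s)"
proof -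
  have "q\<^sup>2 / (q\<^sup>2 * \<xi> (j + 1)) = inverse (\<xi> (j + 1))" and "q\<^sup>2 * \<xi> (j + 1) \<noteq> 0"
    using q_ne_0 \<xi>_ne_0 by (simp_all add: field_simps)
  then show ?thesis
    using q_ne_0 \<xi>_ne_0 unfolding kmc_def
    by (simp add: psi_minus_nth inverse_psi_minus_nth \<xi>_shifted \<xi>_def[symmetric] geom_coeff_def)
qed

text \<open>The relation between \<open>K\<^sub>i\<^sup>\<plusminus>(z)\<close> and \<open>E\<^sub>j(w)\<close>, read off on \<open>[u]\<^sub>p\<^sub>-\<^sub>1\<close>, which
  \<open>E\<^sub>j(w)\<close> sends to \<open>[u]\<^sub>p\<close> at \<open>w = \<xi> p\<close>.\<close>

lemma Kp_eig_E_relation: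
  assumes "cong_n n (j + p) k"
  shows "q powi cartan n i j * \<xi> p * Kp_eig i p r - d powi mmat n i j * Kp_eig i p (r + 1)
       = \<xi> p * Kp_eig i (p - 1) r
         - d powi mmat n i j * q powi cartan n i j * Kp_eig i (p - 1) (r + 1)"
proof -
  have c1: "cong_n n (p + i) k \<longleftrightarrow> cong_n n i j"
    and c2: "cong_n n (p + i + 1) k \<longleftrightarrow> cong_n n i (j - 1)"
    and c3: "cong_n n (p - 1 + i) k \<longleftrightarrow> cong_n n i (j + 1)"
    and c4: "cong_n n (p - 1 + i + 1) k \<longleftrightarrow> cong_n n i j"
    by (rule cong_n_transfer[OF assms], simp)+
  have \<xi>_pred: "\<xi> (p - 1) = q / d * \<xi> p"
    using \<xi>_succ[of "p - 1"] q_ne_0 d_ne_0 by simp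
  show ?thesis
  proof (cases i j rule: cartan_cases)
    case same
    have e1: "Kp_eig i p r = (if r < 0 then 0 else geom_coeff q qq (\<xi> p) (nat r))"
      and e0: "Kp_eig i (p - 1) r =
        (if r < 0 then 0 else geom_coeff (inverse q) (- qq) (\<xi> p) (nat r))"
      for r unfolding Kp_eig_def kpc_eq_geom_coeff using same c1 c3 c4 by simp_all
    show ?thesis unfolding e1 e0 same(4,5)
      by (rule geom_coeff_plus_relation)
        (use q_ne_0 qq_ne_0 in \<open>simp_all add: geom_coeff_def field_simps power2_eq_square\<close>)
  next
    case succ
    have e1: "Kp_eig i p r = (if r < 0 then 0 else geom_coeff 1 0 0 (nat r))"
      and e0: "Kp_eig i (p - 1) r = (if r < 0 then 0 else geom_coeff q qq (q / d * \<xi> p) (nat r))"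
      for r unfolding Kp_eig_def kpc_eq_geom_coeff using succ c1 c2 c3 \<xi>_pred by simp_all
    show ?thesis unfolding e1 e0 succ(4,5)
      by (rule geom_coeff_plus_relation)
        (use q_ne_0 d_ne_0 qq_ne_0 \<xi>_ne_0 in \<open>simp_all add: geom_coeff_def field_simps\<close>)
  next
    case pred
    have e1: "Kp_eig i p r =
        (if r < 0 then 0 else geom_coeff (inverse q) (- qq) (d / q * \<xi> p) (nat r))"
      and e0: "Kp_eig i (p - 1) r = (if r < 0 then 0 else geom_coeff 1 0 0 (nat r))"
      for r unfolding Kp_eig_def kpc_eq_geom_coeff using pred c1 c2 c3 c4 \<xi>_succ by simp_all
    show ?thesis unfolding e1 e0 pred(4,5)
      by (rule geom_coeff_plus_relation)
        (use q_ne_0 d_ne_0 qq_ne_0 \<xi>_ne_0 in \<open>simp_all add: geom_coeff_def field_simps\<close>)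
  next
    case far
    then show ?thesis
      unfolding Kp_eig_def kpc_eq_geom_coeff using c1 c2 c3 c4 by simp
  qed
qed

lemma Km_eig_E_relation:
  assumes "cong_n n (j + p) k"
  shows "q powi cartan n i j * \<xi> p * Km_eig i p r - d powi mmat n i j * Km_eig i p (r + 1)
       = \<xi> p * Km_eig i (p - 1) r
         - d powi mmat n i j * q powi cartan n i j * Km_eig i (p - 1) (r + 1)"
proof -
  have c1: "cong_n n (p + i) k \<longleftrightarrow> cong_n n i j"
    and c2: "cong_n n (p + i + 1) k \<longleftrightarrow> cong_n n i (j - 1)"
    and c3: "cong_n n (p - 1 + i) k \<longleftrightarrow> cong_n n i (j + 1)"
    and c4: "cong_n n (p - 1 + i + 1) k \<longleftrightarrow> cong_n n i j"
    by (rule cong_n_transfer[OF assms], simp)+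
  have \<xi>_pred: "\<xi> (p - 1) = q / d * \<xi> p"
    using \<xi>_succ[of "p - 1"] q_ne_0 d_ne_0 by simp
  show ?thesis
  proof (cases i j rule: cartan_cases)
    case same
    have e1: "Km_eig i p r =
        (if 0 < r then 0 else geom_coeff (inverse q) (- qq) (inverse (\<xi> p)) (nat (- r)))"
      and e0: "Km_eig i (p - 1) r =
        (if 0 < r then 0 else geom_coeff q qq (inverse (\<xi> p)) (nat (- r)))"
      for r unfolding Km_eig_def kmc_eq_geom_coeff using same c1 c3 c4 by simp_all
    show ?thesis unfolding e1 e0 same(4,5)
      by (rule geom_coeff_minus_relation)
        (use q_ne_0 qq_ne_0 \<xi>_ne_0 in \<open>simp_all add: geom_coeff_def field_simps power2_eq_square\<close>)
  next
    case succ
    have e1: "Km_eig i p r = (if 0 < r then 0 else geom_coeff 1 0 0 (nat (- r)))"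
      and e0: "Km_eig i (p - 1) r =
        (if 0 < r then 0 else geom_coeff (inverse q) (- qq) (inverse (q / d * \<xi> p)) (nat (- r)))"
      for r unfolding Km_eig_def kmc_eq_geom_coeff using succ c1 c2 c3 \<xi>_pred by simp_all
    show ?thesis unfolding e1 e0 succ(4,5)
      by (rule geom_coeff_minus_relation)
        (use q_ne_0 d_ne_0 qq_ne_0 \<xi>_ne_0 in \<open>simp_all add: geom_coeff_def field_simps\<close>)
  next
    case pred
    have e1: "Km_eig i p r =
        (if 0 < r then 0 else geom_coeff q qq (inverse (d / q * \<xi> p)) (nat (- r)))"
      and e0: "Km_eig i (p - 1) r = (if 0 < r then 0 else geom_coeff 1 0 0 (nat (- r)))"
      for r unfolding Km_eig_def kmc_eq_geom_coeff using pred c1 c2 c3 c4 \<xi>_succ by simp_all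
    show ?thesis unfolding e1 e0 pred(4,5)
      by (rule geom_coeff_minus_relation)
        (use q_ne_0 d_ne_0 qq_ne_0 \<xi>_ne_0 in \<open>simp_all add: geom_coeff_def field_simps\<close>)
  next
    case far
    then show ?thesis
      unfolding Km_eig_def kmc_eq_geom_coeff using c1 c2 c3 c4 by simp
  qed
qed

abbreviation Eu :: "int \<Rightarrow> int \<Rightarrow> op" where "Eu \<equiv> VE n q d k u"
abbreviation Fu :: "int \<Rightarrow> int \<Rightarrow> op" where "Fu \<equiv> VF n q d k u"

lemma VE_apply: "Eu i m v l = (if cong_n n (i + l) k then \<xi> l powi m * v (l - 1) else 0)"
  by (simp add: VE_def \<xi>_def)

lemma VF_apply:
  "Fu i m v l = (if cong_n n (i + l + 1) k then \<xi> (l + 1) powi m * v (l + 1) else 0)"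
  by (simp add: VF_def \<xi>_def)

lemma lin_op_VE: "lin_op (Eu i m)"
proof -
  have "Eu i m = (\<lambda>v l. (if cong_n n (i + l) k then \<xi> l powi m else 0) * v (l + (- 1)))"
    by (auto simp: fun_eq_iff VE_apply)
  then show ?thesis by (simp only: lin_op_weighted_shift)
qed

lemma lin_op_VF: "lin_op (Fu i m)"
proof -
  have "Fu i m = (\<lambda>v l. (if cong_n n (i + l + 1) k then \<xi> (l + 1) powi m else 0) * v (l + 1))"
    by (auto simp: fun_eq_iff VF_apply)
  then show ?thesis by (simp only: lin_op_weighted_shift)
qed

lemma diag_op_E_relation:
  assumes "\<And>p r. cong_n n (j + p) k \<Longrightarrow>
      A * \<xi> p * c p r - D * c p (r + 1) = \<xi> p * c (p - 1) r - D * A * c (p - 1) (r + 1)"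
  shows "osub (osc A (diag_op (\<lambda>l. c l r) \<circ> Eu j (r' + 1)))
              (osc D (diag_op (\<lambda>l. c l (r + 1)) \<circ> Eu j r'))
       = osub (Eu j (r' + 1) \<circ> diag_op (\<lambda>l. c l r))
              (osc (D * A) (Eu j r' \<circ> diag_op (\<lambda>l. c l (r + 1))))" (is "?L = ?R")
proof (intro ext)
  fix v l
  show "?L v l = ?R v l"
  proof (cases "cong_n n (j + l) k")
    case True
    from arg_cong[OF assms[OF True, of r], of "\<lambda>t. \<xi> l powi r' * v (l - 1) * t"] show ?thesis
      unfolding osub_def osc_def diag_op_def comp_def VE_apply \<xi>_powi_succ
      using True by (simp add: algebra_simps)
  qed (simp add: osub_def osc_def diag_op_def VE_apply)
qed

lemma diag_op_F_relation:
  assumes "\<And>p r. cong_n n (j + p) k \<Longrightarrow>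
      A * \<xi> p * c p r - D * c p (r + 1) = \<xi> p * c (p - 1) r - D * A * c (p - 1) (r + 1)"
  shows "osub (diag_op (\<lambda>l. c l r) \<circ> Fu j (r' + 1))
              (osc (D * A) (diag_op (\<lambda>l. c l (r + 1)) \<circ> Fu j r'))
       = osub (osc A (Fu j (r' + 1) \<circ> diag_op (\<lambda>l. c l r)))
              (osc D (Fu j r' \<circ> diag_op (\<lambda>l. c l (r + 1))))" (is "?L = ?R")
proof (intro ext)
  fix v l
  show "?L v l = ?R v l"
  proof (cases "cong_n n (j + l + 1) k")
    case True
    then have "cong_n n (j + (l + 1)) k" by (simp add: add.assoc)
    from arg_cong[OF assms[OF this, of r], of "\<lambda>t. \<xi> (l + 1) powi r' * v (l + 1) * t"]
    show ?thesis
      unfolding osub_def osc_def diag_op_def comp_def VF_apply \<xi>_powi_succ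
      using True by (simp add: algebra_simps)
  qed (simp add: osub_def osc_def diag_op_def VF_apply)
qed

lemma E_F_eig_relation:
  "(if cong_n n (l + i) k then \<xi> l powi r else 0)
     - (if cong_n n (l + i + 1) k then \<xi> (l + 1) powi r else 0)
   = inverse qq * (Kp_eig i l r - Km_eig i l r)"
proof -
  have excl: "cong_n n (l + i) k \<Longrightarrow> \<not> cong_n n (l + i + 1) k"
    using not_cong_n_near[of "l + i" k "l + i + 1" k 1] by simp
  have powi_nat: "x powi r = (if 0 \<le> r then x ^ nat r else inverse x ^ nat (- r))" for x :: complex
    by (simp add: power_int_def)
  consider "0 < r" | "r = 0" | "r < 0" by linarith
  then show ?thesis
    using excl q_ne_0 qq_ne_0 \<xi>_ne_0[of l] \<xi>_ne_0[of "l + 1"]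
    by cases (auto simp: Kp_eig_def Km_eig_def kpc_eq_geom_coeff kmc_eq_geom_coeff geom_coeff_def
        powi_nat field_simps)
qed

lemma E_F_relation:
  assumes "i \<in> {0..<int n}" "j \<in> {0..<int n}"
  shows "osub (Eu i a \<circ> Fu j b) (Fu j b \<circ> Eu i a)
     = (if i = j then osc (inverse qq) (osub (VKp n q d k u i (a + b)) (VKm n q d k u i (a + b)))
        else ozero)" (is "?L = ?R")
proof (intro ext)
  fix v l
  have idx: "i + (l - 1) + 1 = l + i" "j + (l - 1) + 1 = l + j" "i + (l + 1) = l + i + 1"
    "i + l = l + i" "j + l + 1 = l + j + 1" "j + l = l + j"
    by simp_all
  show "?L v l = ?R v l"
  proof (cases "i = j")
    case True
    have "osub (Eu i a \<circ> Fu j b) (Fu j b \<circ> Eu i a) v l =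
      ((if cong_n n (l + i) k then \<xi> l powi (a + b) else 0)
        - (if cong_n n (l + i + 1) k then \<xi> (l + 1) powi (a + b) else 0)) * v l"
      unfolding osub_def comp_def VE_apply VF_apply idx True
      using \<xi>_ne_0[of l] \<xi>_ne_0[of "l + 1"] by (simp add: power_int_add algebra_simps)
    also have "\<dots> = inverse qq * (Kp_eig i l (a + b) - Km_eig i l (a + b)) * v l"
      by (simp only: E_F_eig_relation)
    finally show ?thesis
      using True
      by (simp add: osc_def osub_def VKp_eq_diag_op VKm_eq_diag_op diag_op_def algebra_simps)
  next
    case False
    then have "\<not> cong_n n i j" using cong_n_eq_in_range[OF assms] by blast
    then have "\<not> (cong_n n (l + i) k \<and> cong_n n (l + j) k)"
      and "\<not> (cong_n n (l + j + 1) k \<and> cong_n n (l + i + 1) k)"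
      using cong_n_diff[of n "l + i" k "l + j" k i j]
        cong_n_diff[of n "l + i + 1" k "l + j + 1" k i j]
      by auto
    then show ?thesis
      unfolding osub_def comp_def VE_apply VF_apply idx using False by (auto simp: ozero_def)
  qed
qed

lemma E_E_relation:
  "osub (osc (d powi mmat n i j) (Eu i (r + 1) \<circ> Eu j s))
        (osc (q powi cartan n i j) (Eu i r \<circ> Eu j (s + 1)))
 = osub (osc (d powi mmat n i j * q powi cartan n i j) (Eu j s \<circ> Eu i (r + 1)))
        (Eu j (s + 1) \<circ> Eu i r)" (is "?L = ?R")
proof (intro ext)
  fix v l
  have P1: "cong_n n i (j - 1)" if "cong_n n (i + l) k" "cong_n n (j + (l - 1)) k"
    using that by (rule cong_n_diff) simp
  have P2: "cong_n n i (j + 1)" if "cong_n n (j + l) k" "cong_n n (i + (l - 1)) k"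
    using cong_n_diff[OF that(2,1)] by simp
  have \<xi>_l: "\<xi> l = d / q * \<xi> (l - 1)" using \<xi>_succ[of "l - 1"] by simp
  have pow: "\<xi> l powi (r + 1) = \<xi> l powi r * (d / q * \<xi> (l - 1))"
      "\<xi> l powi (s + 1) = \<xi> l powi s * (d / q * \<xi> (l - 1))"
      "\<xi> (l - 1) powi (r + 1) = \<xi> (l - 1) powi r * \<xi> (l - 1)"
      "\<xi> (l - 1) powi (s + 1) = \<xi> (l - 1) powi s * \<xi> (l - 1)"
    unfolding \<xi>_powi_succ by (simp_all only: \<xi>_l)
  note unf = osub_def osc_def comp_def VE_apply pow
  show "?L v l = ?R v l"
  proof (cases i j rule: cartan_cases)
    case succ
    then show ?thesis
      unfolding unf using P1 q_ne_0 d_ne_0 \<xi>_ne_0[of "l - 1"] by (auto simp: field_simps)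
  next
    case pred
    then show ?thesis
      unfolding unf using P2 q_ne_0 d_ne_0 \<xi>_ne_0[of "l - 1"] by (auto simp: field_simps)
  qed (unfold unf, use P1 P2 in auto)
qed

lemma F_F_relation:
  "osub (osc (d powi mmat n i j) (Fu i (r + 1) \<circ> Fu j s))
        (osc (q powi (- cartan n i j)) (Fu i r \<circ> Fu j (s + 1)))
 = osub (osc (d powi mmat n i j * q powi (- cartan n i j)) (Fu j s \<circ> Fu i (r + 1)))
        (Fu j (s + 1) \<circ> Fu i r)" (is "?L = ?R")
proof (intro ext)
  fix v l
  have P1: "cong_n n i (j + 1)" if "cong_n n (i + l + 1) k" "cong_n n (j + (l + 1) + 1) k"
    using that by (rule cong_n_diff) simp
  have P2: "cong_n n i (j - 1)" if "cong_n n (j + l + 1) k" "cong_n n (i + (l + 1) + 1) k"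
    using cong_n_diff[OF that(2,1)] by simp
  have \<xi>_l: "\<xi> (l + 1 + 1) = d / q * \<xi> (l + 1)" by (rule \<xi>_succ)
  have pow: "\<xi> (l + 1 + 1) powi (r + 1) = \<xi> (l + 1 + 1) powi r * (d / q * \<xi> (l + 1))"
      "\<xi> (l + 1 + 1) powi (s + 1) = \<xi> (l + 1 + 1) powi s * (d / q * \<xi> (l + 1))"
      "\<xi> (l + 1) powi (r + 1) = \<xi> (l + 1) powi r * \<xi> (l + 1)"
      "\<xi> (l + 1) powi (s + 1) = \<xi> (l + 1) powi s * \<xi> (l + 1)"
    unfolding \<xi>_powi_succ by (simp_all only: \<xi>_l)
  note unf = osub_def osc_def comp_def VF_apply pow
  show "?L v l = ?R v l"
  proof (cases i j rule: cartan_cases)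
    case succ
    then show ?thesis
      unfolding unf using P2 q_ne_0 d_ne_0 \<xi>_ne_0[of "l + 1"] by (auto simp: field_simps)
  next
    case pred
    then show ?thesis
      unfolding unf using P1 q_ne_0 d_ne_0 \<xi>_ne_0[of "l + 1"] by (auto simp: field_simps)
  qed (unfold unf, use P1 P2 in auto)
qed

text \<open>Each monomial of a Serre relation applies \<open>E\<^sub>i\<close> (or \<open>F\<^sub>i\<close>) twice with at most one
  generator in between, which would need two indices differing by \<open>1\<close> or \<open>2\<close> to be congruent
  modulo \<open>n \<ge> 3\<close>.\<close>

lemma E_E_zero: "Eu i a (Eu i b v) = (\<lambda>l. 0)"
proof (intro ext)
  fix l
  have "\<not> (cong_n n (i + (l - 1)) k \<and> cong_n n (i + l) k)"
    using not_cong_n_near[of "i + (l - 1)" k "i + l" k 1] by auto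
  then show "Eu i a (Eu i b v) l = 0" by (auto simp: VE_apply)
qed

lemma E_E_E_zero: "Eu i a (Eu j b (Eu i c v)) = (\<lambda>l. 0)"
proof (intro ext)
  fix l
  have "\<not> (cong_n n (i + (l - 1 - 1)) k \<and> cong_n n (i + l) k)"
    using not_cong_n_near[of "i + (l - 1 - 1)" k "i + l" k 2] by auto
  then show "Eu i a (Eu j b (Eu i c v)) l = 0" by (auto simp: VE_apply)
qed

lemma F_F_zero: "Fu i a (Fu i b v) = (\<lambda>l. 0)"
proof (intro ext)
  fix l
  have "\<not> (cong_n n (i + l + 1) k \<and> cong_n n (i + (l + 1) + 1) k)"
    using not_cong_n_near[of "i + l + 1" k "i + (l + 1) + 1" k 1] by auto
  then show "Fu i a (Fu i b v) l = 0" by (auto simp: VF_apply)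
qed

lemma F_F_F_zero: "Fu i a (Fu j b (Fu i c v)) = (\<lambda>l. 0)"
proof (intro ext)
  fix l
  have "\<not> (cong_n n (i + l + 1) k \<and> cong_n n (i + (l + 1 + 1) + 1) k)"
    using not_cong_n_near[of "i + l + 1" k "i + (l + 1 + 1) + 1" k 2] by auto
  then show "Fu i a (Fu j b (Fu i c v)) l = 0" by (auto simp: VF_apply)
qed

lemma serre_VE: "serre q Eu i j r1 r2 s = ozero"
proof -
  have "Eu i m (\<lambda>l. 0) = (\<lambda>l. 0)" for i m by (simp add: VE_apply fun_eq_iff)
  then show ?thesis
    unfolding serre_def oadd_def osub_def osc_def comp_def E_E_zero E_E_E_zero
    by (simp add: ozero_def)
qed

lemma serre_VF: "serre q Fu i j r1 r2 s = ozero"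
proof -
  have "Fu i m (\<lambda>l. 0) = (\<lambda>l. 0)" for i m by (simp add: VF_apply fun_eq_iff)
  then show ?thesis
    unfolding serre_def oadd_def osub_def osc_def comp_def F_F_zero F_F_F_zero
    by (simp add: ozero_def)
qed

lemma E_E_commute:
  assumes "\<not> cong_n n i (j + 1)" "\<not> cong_n n i (j - 1)"
  shows "Eu i r (Eu j s v) = Eu j s (Eu i r v)"
proof (intro ext)
  fix l
  have "\<not> (cong_n n (i + l) k \<and> cong_n n (j + (l - 1)) k)"
    and "\<not> (cong_n n (j + l) k \<and> cong_n n (i + (l - 1)) k)"
    using assms cong_n_diff[of n "i + l" k "j + (l - 1)" k i "j - 1"]
      cong_n_diff[of n "i + (l - 1)" k "j + l" k i "j + 1"] by auto
  then show "Eu i r (Eu j s v) l = Eu j s (Eu i r v) l" by (auto simp: VE_apply)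
qed

lemma F_F_commute:
  assumes "\<not> cong_n n i (j + 1)" "\<not> cong_n n i (j - 1)"
  shows "Fu i r (Fu j s v) = Fu j s (Fu i r v)"
proof (intro ext)
  fix l
  have "\<not> (cong_n n (i + l + 1) k \<and> cong_n n (j + (l + 1) + 1) k)"
    and "\<not> (cong_n n (j + l + 1) k \<and> cong_n n (i + (l + 1) + 1) k)"
    using assms cong_n_diff[of n "i + l + 1" k "j + (l + 1) + 1" k i "j + 1"]
      cong_n_diff[of n "i + (l + 1) + 1" k "j + l + 1" k i "j - 1"] by auto
  then show "Fu i r (Fu j s v) l = Fu j s (Fu i r v) l" by (auto simp: VF_apply)
qed

lemma Kp_eig_Km_eig_0: "Kp_eig i j 0 * Km_eig i j 0 = 1"
  using q_ne_0
  by (simp add: Kp_eig_def Km_eig_def kpc_eq_geom_coeff kmc_eq_geom_coeff geom_coeff_def)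

lemma kpc_0_ne_0: "kpc n q d k u i j 0 \<noteq> 0"
  using Kp_eig_Km_eig_0[of i j] by (auto simp: Kp_eig_def)

lemma kmc_0_ne_0: "kmc n q d k u i j 0 \<noteq> 0"
  using Kp_eig_Km_eig_0[of i j] by (auto simp: Km_eig_def)

definition K_op :: "int \<Rightarrow> op" where
  "K_op i = diag_op (\<lambda>j. Kp_eig i j 0)"

definition Kinv_op :: "int \<Rightarrow> op" where
  "Kinv_op i = diag_op (\<lambda>j. Km_eig i j 0)"

text \<open>\<open>H\<^sub>i\<^sub>,\<^sub>\<plusminus>\<^sub>m\<close> acts on \<open>[u]\<^sub>j\<close> by \<open>\<plusminus>1/(q - q\<^sup>-\<^sup>1)\<close> times the \<open>m\<close>-th coefficient of a
  logarithm of the normalised eigenvalue series \<open>K\<^sub>i\<^sup>\<plusminus>(z) / K\<^sub>i\<^sup>\<plusminus>\<^sup>1\<close>.\<close>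

definition log_Kp :: "int \<Rightarrow> int \<Rightarrow> complex fps" where
  "log_Kp i j = (SOME g. g $ 0 = 0 \<and>
     fps_exp 1 oo g = fps_const (inverse (Kp_eig i j 0)) * Abs_fps (kpc n q d k u i j))"

definition log_Km :: "int \<Rightarrow> int \<Rightarrow> complex fps" where
  "log_Km i j = (SOME g. g $ 0 = 0 \<and>
     fps_exp 1 oo g = fps_const (inverse (Km_eig i j 0)) * Abs_fps (kmc n q d k u i j))"

definition H_op :: "int \<Rightarrow> int \<Rightarrow> op" where
  "H_op i l = diag_op (\<lambda>j. if 0 < l then log_Kp i j $ nat l / qq
                         else if l < 0 then log_Km i j $ nat (- l) / (- qq) else 0)"

lemma log_Kp: "log_Kp i j $ 0 = 0 \<and>
    fps_exp 1 oo log_Kp i j = fps_const (inverse (Kp_eig i j 0)) * Abs_fps (kpc n q d k u i j)"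
  unfolding log_Kp_def
  by (rule someI_ex, rule ex_fps_exp_compose_eq)
    (use kpc_0_ne_0[of i j] in \<open>simp add: Kp_eig_def\<close>)

lemma log_Km: "log_Km i j $ 0 = 0 \<and>
    fps_exp 1 oo log_Km i j = fps_const (inverse (Km_eig i j 0)) * Abs_fps (kmc n q d k u i j)"
  unfolding log_Km_def
  by (rule someI_ex, rule ex_fps_exp_compose_eq)
    (use kmc_0_ne_0[of i j] in \<open>simp add: Km_eig_def\<close>)

lemma Kplus_eq_VKp: "Kplus q K_op H_op i r = VKp n q d k u i r"
proof (cases "r < 0")
  case False
  have "expcoef (\<lambda>m. osc qq (H_op i (int m))) (nat r)
      = diag_op (\<lambda>j. (fps_exp 1 oo log_Kp i j) $ nat r)"
    by (rule expcoef_diag_op) (use qq_ne_0 log_Kp in \<open>auto simp: osc_def H_op_def diag_op_def\<close>)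
  then show ?thesis
    using False kpc_0_ne_0
    by (simp add: Kplus_def K_op_def log_Kp VKp_def Kp_eig_def diag_op_def comp_def
        mult.assoc[symmetric])
qed (simp add: Kplus_def VKp_def ozero_def)

lemma Kminus_eq_VKm: "Kminus q Kinv_op H_op i r = VKm n q d k u i r"
proof (cases "0 < r")
  case False
  have "expcoef (\<lambda>m. osc (- qq) (H_op i (- int m))) (nat (- r))
      = diag_op (\<lambda>j. (fps_exp 1 oo log_Km i j) $ nat (- r))"
    by (rule expcoef_diag_op) (use qq_ne_0 log_Km in \<open>auto simp: osc_def H_op_def diag_op_def\<close>)
  then show ?thesis
    using False kmc_0_ne_0
    by (simp add: Kminus_def Kinv_op_def log_Km VKm_def Km_eig_def diag_op_def comp_def
        mult.assoc[symmetric])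
qed (simp add: Kminus_def VKm_def ozero_def)

lemma En_module_Vk: "En_module n q d Eu Fu H_op K_op Kinv_op"
proof -
  define c where "c s = (if s then Kp_eig else Km_eig)" for s
  have Kplus: "Kplus q K_op H_op = VKp n q d k u"
    and Kminus: "Kminus q Kinv_op H_op = VKm n q d k u"
    by (intro ext Kplus_eq_VKp Kminus_eq_VKm)+
  have KK: "(if s then VKp n q d k u else VKm n q d k u) i r = diag_op (\<lambda>l. c s i l r)" for s i r
    by (simp add: c_def VKp_eq_diag_op VKm_eq_diag_op)
  have rel: "q powi cartan n i j * \<xi> p * c s i p r - d powi mmat n i j * c s i p (r + 1)
      = \<xi> p * c s i (p - 1) r - d powi mmat n i j * q powi cartan n i j * c s i (p - 1) (r + 1)"
    if "cong_n n (j + p) k" for s i j p r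
    using Kp_eig_E_relation[OF that] Km_eig_E_relation[OF that] by (simp add: c_def)
  have E_rel: "osub (osc (q powi cartan n i j) (diag_op (\<lambda>l. c s i l r) \<circ> Eu j (r' + 1)))
        (osc (d powi mmat n i j) (diag_op (\<lambda>l. c s i l (r + 1)) \<circ> Eu j r'))
      = osub (Eu j (r' + 1) \<circ> diag_op (\<lambda>l. c s i l r))
        (osc (d powi mmat n i j * q powi cartan n i j) (Eu j r' \<circ> diag_op (\<lambda>l. c s i l (r + 1))))"
    and F_rel: "osub (diag_op (\<lambda>l. c s i l r) \<circ> Fu j (r' + 1))
        (osc (d powi mmat n i j * q powi cartan n i j) (diag_op (\<lambda>l. c s i l (r + 1)) \<circ> Fu j r'))
      = osub (osc (q powi cartan n i j) (Fu j (r' + 1) \<circ> diag_op (\<lambda>l. c s i l r)))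
        (osc (d powi mmat n i j) (Fu j r' \<circ> diag_op (\<lambda>l. c s i l (r + 1))))" for s i j r r'
    by (rule diag_op_E_relation diag_op_F_relation, rule rel, assumption)+
  show ?thesis
    unfolding En_module_def Let_def Kplus Kminus KK oeq_def
    apply (intro conjI)
    subgoal by (simp add: lin_op_VE lin_op_VF)
    subgoal by (simp add: H_op_def lin_op_diag_op)
    subgoal by (simp add: K_op_def Kinv_op_def lin_op_diag_op)
    subgoal by (simp add: K_op_def Kinv_op_def diag_op_comp diag_op_one Kp_eig_Km_eig_0
        mult.commute[of "Km_eig _ _ 0"])
    subgoal by (simp add: diag_op_comp mult.commute)
    subgoal by (simp add: E_rel)
    subgoal by (simp add: F_rel)
    subgoal by (simp add: E_F_relation c_def VKp_eq_diag_op VKm_eq_diag_op)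
    subgoal by (simp add: E_E_relation)
    subgoal by (simp add: F_F_relation)
    subgoal by (simp add: serre_VE serre_VF oadd_def ozero_def)
    subgoal by (auto intro: E_E_commute F_F_commute)
    done
qed

lemma deg_step:
  assumes "i \<in> {0..<int n}" "a \<in> {0..<int n}" "cong_n n (i + l) k"
  shows "deg n k l a = deg n k (l - 1) a + unitv i a"
proof -
  have "cong_n n l (k - a) \<longleftrightarrow> cong_n n a i"
    by (rule cong_n_transfer[OF assms(3)]) simp
  also have "\<dots> \<longleftrightarrow> a = i"
    using cong_n_eq_in_range[OF assms(2,1)] by (auto simp: cong_n_def)
  finally show ?thesis
    using deg_eq_deg_pred[of n k l a] n_ge_3 by (simp add: unitv_def)
qed

lemma graded_Vk: "graded n (deg n k) Eu Fu H_op K_op Kinv_op"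
  unfolding graded_def
proof (intro allI ballI conjI impI)
  fix \<alpha> i m v
  assume i: "i \<in> {0..<int n}" and v: "v \<in> Vhom n (deg n k) \<alpha>"
  then have "v \<in> Vfin" by (simp add: Vhom_def)
  show "Eu i m v \<in> Vhom n (deg n k) (\<lambda>a. \<alpha> a + unitv i a)"
    unfolding Vhom_def
  proof (intro CollectI conjI allI impI ballI)
    show "Eu i m v \<in> Vfin" using lin_op_VE \<open>v \<in> Vfin\<close> by (simp add: lin_op_def)
    fix l a assume "Eu i m v l \<noteq> 0" and a: "a \<in> {0..<int n}"
    then have "cong_n n (i + l) k" and "v (l - 1) \<noteq> 0" by (auto simp: VE_apply split: if_splits)
    then show "deg n k l a = \<alpha> a + unitv i a"
      using v a deg_step[OF i a] by (simp add: Vhom_def)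
  qed
  show "Fu i m v \<in> Vhom n (deg n k) (\<lambda>a. \<alpha> a - unitv i a)"
    unfolding Vhom_def
  proof (intro CollectI conjI allI impI ballI)
    show "Fu i m v \<in> Vfin" using lin_op_VF \<open>v \<in> Vfin\<close> by (simp add: lin_op_def)
    fix l a assume "Fu i m v l \<noteq> 0" and a: "a \<in> {0..<int n}"
    then have "cong_n n (i + (l + 1)) k" and "v (l + 1) \<noteq> 0"
      by (auto simp: VF_apply add.assoc split: if_splits)
    then show "deg n k l a = \<alpha> a - unitv i a"
      using v a deg_step[OF i a, of "l + 1"] by (simp add: Vhom_def)
  qed
qed (simp_all add: H_op_def K_op_def Kinv_op_def diag_op_Vhom)

lemma level_Vk: "level n Kinv_op 1"
  unfolding level_def
proof
  fix v :: vec
  have "ocomp_list (map (\<lambda>i. Kinv_op (int i)) [0..<n])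
      = diag_op (\<lambda>j. \<Prod>m\<leftarrow>[0..<n]. Km_eig (int m) j 0)"
    by (rule ocomp_list_diag_op) (simp add: Kinv_op_def)
  moreover have "(\<Prod>m\<leftarrow>[0..<n]. Km_eig (int m) j 0) = 1" for j
  proof -
    let ?m0 = "nat ((k - j - 0) mod int n)" and ?m1 = "nat ((k - j - 1) mod int n)"
    have "?m0 \<in> {0..<n}" "?m1 \<in> {0..<n}" using n_ge_3 by (auto simp: nat_less_iff)
    \<comment> \<open>only \<open>K\<^sub>k\<^sub>-\<^sub>j\<close> and \<open>K\<^sub>k\<^sub>-\<^sub>j\<^sub>-\<^sub>1\<close> act nontrivially on \<open>[u]\<^sub>j\<close>, by \<open>q\<^sup>-\<^sup>1\<close> and \<open>q\<close>\<close>
    moreover have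
      "Km_eig (int m) j 0 = (if m = ?m0 then inverse q else 1) * (if m = ?m1 then q else 1)"
      if "m < n" for m
      using cong_n_add_iff_eq[OF that, of j 0 k] cong_n_add_iff_eq[OF that, of j 1 k]
        not_cong_n_near[of "j + int m" k "j + int m + 1" k 1]
      by (auto simp: Km_eig_def kmc_eq_geom_coeff geom_coeff_def)
    ultimately show ?thesis
      using q_ne_0 by (simp add: prod.distinct_set_conv_list[symmetric] prod.distrib prod.delta)
  qed
  ultimately show "ocomp_list (map (\<lambda>i. Kinv_op (int i)) [0..<n]) v = (\<lambda>j. 1 * v j)"
    by (simp add: diag_op_def)
qed

lemma Kp_eig_inj:
  assumes "\<forall>i\<in>{0..<int n}. \<forall>r. Kp_eig i l r = Kp_eig i l' r"
  shows "l = l'"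
proof -
  define i where "i = (k - l) mod int n"
  have i: "i \<in> {0..<int n}" using n_ge_3 by (simp add: i_def)
  have c: "cong_n n (l + i) k" by (simp add: i_def cong_n_def mod_add_right_eq)
  have e0: "Kp_eig i l 0 = Kp_eig i l' 0" and e1: "Kp_eig i l 1 = Kp_eig i l' 1"
    using assms i by auto
  \<comment> \<open>the constant terms \<open>q\<close>, \<open>q\<^sup>-\<^sup>1\<close>, \<open>1\<close> are distinct, so \<open>l'\<close> lies in the residue class of \<open>l\<close>\<close>
  have c': "cong_n n (l' + i) k"
  proof (rule ccontr)
    assume "\<not> cong_n n (l' + i) k"
    then show False
      using e0 c q_ne_1 qq_ne_0
      by (cases "cong_n n (l' + i + 1) k") (auto simp: Kp_eig_def kpc_eq_geom_coeff geom_coeff_def)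
  qed
  then have "qq * \<xi> l = qq * \<xi> l'"
    using e1 c by (simp add: Kp_eig_def kpc_eq_geom_coeff geom_coeff_def)
  then show ?thesis using qq_ne_0 \<xi>_inj by simp
qed

lemma eigsp_Kp_eig:
  assumes "v \<in> eigsp n (VKp n q d k u) (VKm n q d k u) lam" "v l \<noteq> 0" "i \<in> {0..<int n}"
  shows "Kp_eig i l r = lam True i r"
proof -
  have "VKp n q d k u i r v l = lam True i r * v l"
    using assms(1,3) unfolding eigsp_def by auto
  then show ?thesis using assms(2) by (simp add: VKp_eq_diag_op diag_op_def)
qed

lemma tame_Vk: "tame n (VKp n q d k u) (VKm n q d k u)"
  unfolding tame_def weighted_def
proof (intro conjI ballI allI impI)
  fix v assume v: "v \<in> Vfin"
  define S where "S = {j. v j \<noteq> 0}"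
  have fS: "finite S" using v by (simp add: Vfin_def S_def)
  define ws where "ws = map (\<lambda>j l. if l = j then v j else 0) (sorted_list_of_set S)"
  show "\<exists>ws. (\<forall>w\<in>set ws. \<exists>lam. w \<in> eigsp n (VKp n q d k u) (VKm n q d k u) lam)
      \<and> v = (\<lambda>j. \<Sum>w\<leftarrow>ws. w j)"
  proof (intro exI[of _ ws] conjI ballI)
    fix w assume "w \<in> set ws"
    then obtain j where w: "w = (\<lambda>l. if l = j then v j else 0)" by (auto simp: ws_def)
    have "{l. w l \<noteq> 0} \<subseteq> {j}" by (auto simp: w)
    then have "w \<in> Vfin" unfolding Vfin_def by (auto intro: finite_subset)
    then have "w \<in> eigsp n (VKp n q d k u) (VKm n q d k u)
        (\<lambda>s i r. if s then Kp_eig i j r else Km_eig i j r)"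
      unfolding eigsp_def by (auto simp: w VKp_eq_diag_op VKm_eq_diag_op diag_op_def fun_eq_iff)
    then show "\<exists>lam. w \<in> eigsp n (VKp n q d k u) (VKm n q d k u) lam" by blast
  next
    have "(\<Sum>w\<leftarrow>ws. w l) = v l" for l
      using fS by (simp add: ws_def o_def sum_list_distinct_conv_sum_set S_def)
    then show "v = (\<lambda>j. \<Sum>w\<leftarrow>ws. w j)" by simp
  qed
next
  fix lam v w
  assume v: "v \<in> eigsp n (VKp n q d k u) (VKm n q d k u) lam"
    and w: "w \<in> eigsp n (VKp n q d k u) (VKm n q d k u) lam" and "v \<noteq> vzero"
  from \<open>v \<noteq> vzero\<close> obtain l0 where l0: "v l0 \<noteq> 0" by (auto simp: vzero_def)
  have supp: "l = l0" if x: "x \<in> eigsp n (VKp n q d k u) (VKm n q d k u) lam" "x l \<noteq> 0" for x l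
  proof (rule Kp_eig_inj, intro ballI allI)
    fix i r assume "i \<in> {0..<int n}"
    then show "Kp_eig i l r = Kp_eig i l0 r"
      using eigsp_Kp_eig[OF x] eigsp_Kp_eig[OF v l0] by simp
  qed
  show "\<exists>c. w = (\<lambda>j. c * v j)"
  proof (intro exI ext)
    fix l
    show "w l = w l0 / v l0 * v l"
    proof (cases "l = l0")
      case False
      then have "w l = 0" "v l = 0" using supp[OF w] supp[OF v] by blast+
      then show ?thesis by simp
    qed (use l0 in simp)
  qed
qed

text \<open>If \<open>v\<close> has \<open>v\<^sub>j\<^sub>0 \<noteq> 0 \<noteq> v\<^sub>j\<^sub>1\<close>, then for \<open>i \<equiv> k - j\<^sub>0 - 1\<close> the vector
  \<open>E\<^sub>i\<^sub>,\<^sub>1 v - \<xi>(j\<^sub>1 + 1) E\<^sub>i\<^sub>,\<^sub>0 v\<close> is nonzero at \<open>j\<^sub>0 + 1\<close> (as \<open>\<xi>\<close> is injective), while its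
  support is a shift of part of that of \<open>v\<close> without \<open>j\<^sub>1\<close>.\<close>

lemma E_invariant_subspace_has_basis_vec:
  assumes W: "subspace_V W" and inv: "\<forall>i\<in>{0..<int n}. \<forall>m. Eu i m ` W \<subseteq> W"
  shows "v \<in> W \<Longrightarrow> v \<noteq> vzero \<Longrightarrow> \<exists>j. basis_vec j \<in> W"
proof (induction "card {l. v l \<noteq> 0}" arbitrary: v rule: less_induct)
  case less
  let ?S = "{l. v l \<noteq> 0}"
  have add: "\<forall>v\<in>W. \<forall>w\<in>W. (\<lambda>j. v j + w j) \<in> W" and smult: "\<forall>c. \<forall>v\<in>W. (\<lambda>j. c * v j) \<in> W"
    using W by (simp_all add: subspace_V_def)
  have fS: "finite ?S" using less.prems W by (auto simp: subspace_V_def Vfin_def)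
  obtain j0 where j0: "v j0 \<noteq> 0" using less.prems by (auto simp: vzero_def)
  show ?case
  proof (cases "?S = {j0}")
    case True
    have "(\<lambda>l. inverse (v j0) * v l) \<in> W" using smult less.prems by blast
    moreover have "(\<lambda>l. inverse (v j0) * v l) = basis_vec j0"
      using True j0 by (auto simp: basis_vec_def fun_eq_iff)
    ultimately show ?thesis by auto
  next
    case False
    then obtain j1 where j1: "v j1 \<noteq> 0" "j1 \<noteq> j0" using j0 by blast
    define i where "i = (k - j0 - 1) mod int n"
    have i: "i \<in> {0..<int n}" using n_ge_3 by (simp add: i_def)
    have ci: "cong_n n (i + (j0 + 1)) k" by (simp add: i_def cong_n_def mod_add_left_eq)
    define w where "w = (\<lambda>l. Eu i 1 v l + (- \<xi> (j1 + 1)) * Eu i 0 v l)"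
    have "Eu i 1 v \<in> W" "Eu i 0 v \<in> W" using inv i less.prems(1) by blast+
    then have wW: "w \<in> W"
      unfolding w_def by (rule add[rule_format, OF _ smult[rule_format]])
    have wl: "w l = (if cong_n n (i + l) k then (\<xi> l - \<xi> (j1 + 1)) * v (l - 1) else 0)" for l
      using \<xi>_ne_0[of l] by (simp add: w_def VE_apply algebra_simps)
    have "{l. w l \<noteq> 0} \<subseteq> (\<lambda>j. j + 1) ` (?S - {j1})"
    proof
      fix l assume "l \<in> {l. w l \<noteq> 0}"
      then have "v (l - 1) \<noteq> 0" "l - 1 \<noteq> j1" by (auto simp: wl split: if_splits)
      then show "l \<in> (\<lambda>j. j + 1) ` (?S - {j1})" by (auto intro!: image_eqI[where x = "l - 1"])
    qed
    then have "card {l. w l \<noteq> 0} \<le> card ((\<lambda>j. j + 1) ` (?S - {j1}))"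
      by (rule card_mono[rotated]) (use fS in auto)
    also have "\<dots> \<le> card (?S - {j1})" by (rule card_image_le) (use fS in auto)
    also have "\<dots> < card ?S" using fS j1 by (intro psubset_card_mono) auto
    finally have lt: "card {l. w l \<noteq> 0} < card ?S" .
    have "\<xi> (j0 + 1) \<noteq> \<xi> (j1 + 1)" using j1 \<xi>_inj[of "j0 + 1" "j1 + 1"] by auto
    then have "w (j0 + 1) \<noteq> 0" using ci j0 by (simp add: wl)
    then have "w \<noteq> vzero" by (auto simp: vzero_def fun_eq_iff)
    from less.hyps[OF lt wW this] show ?thesis .
  qed
qed

lemma VE_basis_vec: "Eu ((k - (j + 1)) mod int n) 0 (basis_vec j) = basis_vec (j + 1)"
proof -
  have "cong_n n ((k - (j + 1)) mod int n + (j + 1)) k" by (simp add: cong_n_def mod_add_left_eq)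
  then show ?thesis by (auto simp: VE_apply basis_vec_def fun_eq_iff)
qed

lemma VF_basis_vec: "Fu ((k - j) mod int n) 0 (basis_vec j) = basis_vec (j - 1)"
proof -
  have "cong_n n ((k - j) mod int n + (j - 1) + 1) k" by (simp add: cong_n_def mod_add_left_eq)
  then show ?thesis by (auto simp: VF_apply basis_vec_def fun_eq_iff)
qed

lemma irreducible_Vk: "irreducible_mod n Eu Fu H_op K_op Kinv_op"
  unfolding irreducible_mod_def
proof (intro conjI allI impI)
  show "Vfin \<noteq> {vzero}"
  proof
    assume "Vfin = {vzero}"
    then have "basis_vec 0 = vzero" using basis_vec_Vfin[of 0] by blast
    then have "basis_vec 0 0 = vzero 0" by simp
    then show False by (simp add: basis_vec_def vzero_def)
  qed
next
  fix W
  assume "subspace_V W \<and> (\<forall>i\<in>{0..<int n}. (\<forall>m. Eu i m ` W \<subseteq> W \<and> Fu i m ` W \<subseteq> W) \<and>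
      (\<forall>l. l \<noteq> 0 \<longrightarrow> H_op i l ` W \<subseteq> W) \<and> K_op i ` W \<subseteq> W \<and> Kinv_op i ` W \<subseteq> W)"
  then have W: "subspace_V W" and invE: "\<forall>i\<in>{0..<int n}. \<forall>m. Eu i m ` W \<subseteq> W"
    and invF: "\<forall>i\<in>{0..<int n}. \<forall>m. Fu i m ` W \<subseteq> W" by auto
  show "W = {vzero} \<or> W = Vfin"
  proof (cases "W = {vzero}")
    case False
    then obtain v where "v \<in> W" "v \<noteq> vzero" using W by (auto simp: subspace_V_def)
    then obtain j where j: "basis_vec j \<in> W"
      using E_invariant_subspace_has_basis_vec[OF W invE] by blast
    have "basis_vec t \<in> W" for t
    proof (induction t rule: int_induct[where k = j])
      case base then show ?case by (rule j)
    next
      case (step1 t)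
      have "(k - (t + 1)) mod int n \<in> {0..<int n}" using n_ge_3 by simp
      then show ?case using invE step1.IH VE_basis_vec by (metis image_subset_iff)
    next
      case (step2 t)
      have "(k - t) mod int n \<in> {0..<int n}" using n_ge_3 by simp
      then show ?case using invF step2.IH VF_basis_vec by (metis image_subset_iff)
    qed
    then have "W = Vfin" by (rule subspace_V_eq_Vfin[OF W])
    then show ?thesis ..
  qed simp
qed

end

theorem mainTheorem2:
  fixes n :: nat and q d u :: complex and k :: int
  assumes "n \<ge> 3" and "q \<noteq> 0" and "d \<noteq> 0" and "generic q d"
    and "k \<in> {0..<int n}" and "u \<noteq> 0"
  shows "\<exists>H K Kinv.
     En_module n q d (VE n q d k u) (VF n q d k u) H K Kinv \<and>
     (\<forall>i\<in>{0..<int n}. \<forall>r. oeq (Kplus q K H i r) (VKp n q d k u i r)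
                          \<and> oeq (Kminus q Kinv H i r) (VKm n q d k u i r)) \<and>
     irreducible_mod n (VE n q d k u) (VF n q d k u) H K Kinv \<and>
     tame n (Kplus q K H) (Kminus q Kinv H) \<and>
     graded n (deg n k) (VE n q d k u) (VF n q d k u) H K Kinv \<and>
     level n Kinv 1"
proof -
  interpret Vk_module n q d u k
    using assms by unfold_locales
  have "Kplus q K_op H_op = VKp n q d k u" "Kminus q Kinv_op H_op = VKm n q d k u"
    by (intro ext Kplus_eq_VKp Kminus_eq_VKm)+
  then show ?thesis
    using En_module_Vk irreducible_Vk tame_Vk graded_Vk level_Vk
    by (intro exI[of _ H_op] exI[of _ K_op] exI[of _ Kinv_op]) (simp add: oeq_def)
qed

end
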